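(* Let $H_1,H_2$ be Hermitian matrices, $f_1,f_2:[0,T]\to\mathbb{R}$ twice continuously differentiable, $H(t)=f_1(t)H_1+f_2(t)H_2$, $L\ge1$ an integer, and for $X\in\{(s,1),(g,1),(s,2),(g,2)\}$ let $\mathcal{U}_X=U_X(T,\tfrac{(L-1)T}{L})\cdots U_X(\tfrac{2T}{L},\tfrac{T}{L})U_X(\tfrac TL,0)$ (product of $L$ steps of size $h=T/L$). Then $$\|\mathcal U_{s,1}-U(T,0)\|\le\alpha_{s,1}\tfrac{T^2}{L}+\beta_{s,1}\tfrac{T^3}{L^2},\qquad \|\mathcal U_{g,1}-U(T,0)\|\le\alpha_{g,1}\tfrac{T^2}{L},$$ $$\|\mathcal U_{s,2}-U(T,0)\|\le\alpha_{s,2}\tfrac{T^3}{L^2}+\beta_{s,2}\tfrac{T^4}{L^3}+\gamma_{s,2}\tfrac{T^5}{L^4},\qquad \|\mathcal U_{g,2}-U(T,0)\|\le\alpha_{g,2}\tfrac{T^3}{L^2}.$$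
   Context: $\|\cdot\|$ on matrices is the operator 2-norm; $\|f\|=\|f\|_\infty=\sup_{t\in[0,T]}|f(t)|$. $U(t,s)$ is the exact evolution: $\partial_tU(t,s)=-\mathrm{i} H(t)U(t,s)$, $U(s,s)=I$. Trotter steps: $U_{s,1}(t+h,t)=\exp(-\mathrm{i} f_2(t+h)H_2h)\exp(-\mathrm{i} f_1(t+h)H_1h)$; $U_{g,1}(t+h,t)=\exp(-\mathrm{i}\int_t^{t+h}f_2(s)ds\,H_2)\exp(-\mathrm{i}\int_t^{t+h}f_1(s)ds\,H_1)$; $U_{s,2}(t+h,t)=\exp(-\frac{\mathrm{i} h}{2}f_1(t+h/2)H_1)\exp(-\mathrm{i} hf_2(t+h/2)H_2)\exp(-\frac{\mathrm{i} h}{2}f_1(t+h/2)H_1)$; $U_{g,2}(t+h,t)=\exp(-\mathrm{i}\int_{t+h/2}^{t+h}f_1(s)ds\,H_1)\exp(-\mathrm{i}\int_t^{t+h}f_2(s)ds\,H_2)\exp(-\mathrm{i}\int_t^{t+h/2}f_1(s)ds\,H_1)$. Constants: $\alpha_{s,1}=\frac12\|f_1'\|\|H_1\|+\frac12\|f_2'\|\|H_2\|+\frac12\|f_1\|\|f_2\|\|[H_1,H_2]\|$; $\beta_{s,1}=\frac16\|f_1\|\|f_2'\|\|[H_1,H_2]\|$; $\alpha_{g,1}=\frac12\|f_1\|\|f_2\|\|[H_1,H_2]\|$; $\alpha_{s,2}=\frac{7}{24}\|f_1''\|\|H_1\|+\frac1{12}\|f_1'\|\|f_2\|\|H_1\|+\frac7{24}\|f_2''\|\|H_2\|+\frac16(\|f_1'\|\|f_2\|+\|f_1\|\|f_2'\|)\|[H_1,H_2]\|+\frac1{24}\|f_1\|^2\|f_2\|\|[H_1,[H_1,H_2]]\|+\frac1{12}\|f_1\|\|f_2\|^2\|[H_2,[H_1,H_2]]\|$;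 $\beta_{s,2}=\frac1{64}\|f_1'\|\|f_2'\|\|H_1\|+(\frac1{192}\|f_1\|\|f_2''\|+\frac1{192}\|f_1''\|\|f_2\|+\frac1{48}\|f_1'\|\|f_2'\|)\|[H_1,H_2]\|+\frac1{96}\|f_1\|\|f_1'\|\|f_2\|\|[H_1,[H_1,H_2]]\|+\frac1{48}\|f_1\|\|f_2\|\|f_2'\|\|[H_2,[H_1,H_2]]\|$; $\gamma_{s,2}=\frac1{960}\|f_1'\|^2\|f_2\|\|[H_1,[H_1,H_2]]\|+\frac1{480}\|f_1\|\|f_2'\|^2\|[H_2,[H_1,H_2]]\|$; $\alpha_{g,2}=(\frac7{12}\|f_1\|\|f_2'\|+\frac{11}{24}\|f_1'\|\|f_2\|)\|[H_1,H_2]\|+\frac38\|f_1\|^2\|f_2\|\|[H_1,[H_1,H_2]]\|+\frac1{12}\|f_1\|\|f_2\|^2\|[H_2,[H_2,H_1]]\|$. *)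

theory Defs
  imports "HOL-Analysis.Analysis"
begin

text \<open>Complex n x n matrices are modelled as complex^'n^'n (dimension = CARD('n)).\<close>

definition cmat :: "complex \<Rightarrow> complex^'n^'m \<Rightarrow> complex^'n^'m" where
  "cmat c A = (\<chi> i j. c * A $ i $ j)"

definition hermitian :: "complex^'n^'n \<Rightarrow> bool" where
  "hermitian A \<longleftrightarrow> (\<forall>i j. A $ i $ j = cnj (A $ j $ i))"

text \<open>Operator 2-norm: operator norm w.r.t. the Euclidean norm on complex^'n.\<close>
definition opn :: "complex^'n^'n \<Rightarrow> real" where
  "opn A = onorm (\<lambda>x. A *v x)"

fun mpow :: "complex^'n^'n \<Rightarrow> nat \<Rightarrow> complex^'n^'n" where
  "mpow A 0 = mat 1"
| "mpow A (Suc k) = A ** mpow A k"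

definition mexp :: "complex^'n^'n \<Rightarrow> complex^'n^'n" where
  "mexp A = (\<Sum>k. (1 / fact k) *\<^sub>R mpow A k)"

definition comm :: "complex^'n^'n \<Rightarrow> complex^'n^'n \<Rightarrow> complex^'n^'n" where
  "comm A B = A ** B - B ** A"

definition supn :: "real \<Rightarrow> (real \<Rightarrow> real) \<Rightarrow> real" where
  "supn T f = (SUP t\<in>{0..T}. \<bar>f t\<bar>)"

text \<open>Trotter steps U_X(t+h,t).\<close>
definition Us1 where
  "Us1 f1 f2 H1 H2 h t =
     mexp (cmat (- \<i> * complex_of_real (f2 (t+h) * h)) H2)
  ** mexp (cmat (- \<i> * complex_of_real (f1 (t+h) * h)) H1)"

definition Ug1 where
  "Ug1 f1 f2 H1 H2 h t =
     mexp (cmat (- \<i> * complex_of_real (integral {t..t+h} f2)) H2)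
  ** mexp (cmat (- \<i> * complex_of_real (integral {t..t+h} f1)) H1)"

definition Us2 where
  "Us2 f1 f2 H1 H2 h t =
     mexp (cmat (- \<i> * complex_of_real (h / 2 * f1 (t + h/2))) H1)
  ** mexp (cmat (- \<i> * complex_of_real (h * f2 (t + h/2))) H2)
  ** mexp (cmat (- \<i> * complex_of_real (h / 2 * f1 (t + h/2))) H1)"

definition Ug2 where
  "Ug2 f1 f2 H1 H2 h t =
     mexp (cmat (- \<i> * complex_of_real (integral {t+h/2..t+h} f1)) H1)
  ** mexp (cmat (- \<i> * complex_of_real (integral {t..t+h} f2)) H2)
  ** mexp (cmat (- \<i> * complex_of_real (integral {t..t+h/2} f1)) H1)"

fun stepprod :: "(real \<Rightarrow> complex^'n^'n) \<Rightarrow> real \<Rightarrow> nat \<Rightarrow> complex^'n^'n" where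
  "stepprod S h 0 = mat 1"
| "stepprod S h (Suc k) = S (real k * h) ** stepprod S h k"

definition alpha_s1 :: "real \<Rightarrow> (real\<Rightarrow>real) \<Rightarrow> (real\<Rightarrow>real) \<Rightarrow> (real\<Rightarrow>real) \<Rightarrow> (real\<Rightarrow>real) \<Rightarrow> (real\<Rightarrow>real) \<Rightarrow> (real\<Rightarrow>real) \<Rightarrow> complex^'n^'n \<Rightarrow> complex^'n^'n \<Rightarrow> real" where
  "alpha_s1 T f1 f1' f1'' f2 f2' f2'' H1 H2 =
     1/2 * supn T f1' * opn H1 + 1/2 * supn T f2' * opn H2
   + 1/2 * supn T f1 * supn T f2 * opn (comm H1 H2)"

definition beta_s1 :: "real \<Rightarrow> (real\<Rightarrow>real) \<Rightarrow> (real\<Rightarrow>real) \<Rightarrow> (real\<Rightarrow>real) \<Rightarrow> (real\<Rightarrow>real) \<Rightarrow> (real\<Rightarrow>real) \<Rightarrow> (real\<Rightarrow>real) \<Rightarrow> complex^'n^'n \<Rightarrow> complex^'n^'n \<Rightarrow> real" where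
  "beta_s1 T f1 f1' f1'' f2 f2' f2'' H1 H2 =
     1/6 * supn T f1 * supn T f2' * opn (comm H1 H2)"

definition alpha_g1 :: "real \<Rightarrow> (real\<Rightarrow>real) \<Rightarrow> (real\<Rightarrow>real) \<Rightarrow> (real\<Rightarrow>real) \<Rightarrow> (real\<Rightarrow>real) \<Rightarrow> (real\<Rightarrow>real) \<Rightarrow> (real\<Rightarrow>real) \<Rightarrow> complex^'n^'n \<Rightarrow> complex^'n^'n \<Rightarrow> real" where
  "alpha_g1 T f1 f1' f1'' f2 f2' f2'' H1 H2 =
     1/2 * supn T f1 * supn T f2 * opn (comm H1 H2)"

definition alpha_s2 :: "real \<Rightarrow> (real\<Rightarrow>real) \<Rightarrow> (real\<Rightarrow>real) \<Rightarrow> (real\<Rightarrow>real) \<Rightarrow> (real\<Rightarrow>real) \<Rightarrow> (real\<Rightarrow>real) \<Rightarrow> (real\<Rightarrow>real) \<Rightarrow> complex^'n^'n \<Rightarrow> complex^'n^'n \<Rightarrow> real" where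
  "alpha_s2 T f1 f1' f1'' f2 f2' f2'' H1 H2 =
     7/24 * supn T f1'' * opn H1 + 1/12 * supn T f1' * supn T f2 * opn H1
   + 7/24 * supn T f2'' * opn H2
   + 1/6 * (supn T f1' * supn T f2 + supn T f1 * supn T f2') * opn (comm H1 H2)
   + 1/24 * (supn T f1)^2 * supn T f2 * opn (comm H1 (comm H1 H2))
   + 1/12 * supn T f1 * (supn T f2)^2 * opn (comm H2 (comm H1 H2))"

definition beta_s2 :: "real \<Rightarrow> (real\<Rightarrow>real) \<Rightarrow> (real\<Rightarrow>real) \<Rightarrow> (real\<Rightarrow>real) \<Rightarrow> (real\<Rightarrow>real) \<Rightarrow> (real\<Rightarrow>real) \<Rightarrow> (real\<Rightarrow>real) \<Rightarrow> complex^'n^'n \<Rightarrow> complex^'n^'n \<Rightarrow> real" where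
  "beta_s2 T f1 f1' f1'' f2 f2' f2'' H1 H2 =
     1/64 * supn T f1' * supn T f2' * opn H1
   + (1/192 * supn T f1 * supn T f2'' + 1/192 * supn T f1'' * supn T f2
      + 1/48 * supn T f1' * supn T f2') * opn (comm H1 H2)
   + 1/96 * supn T f1 * supn T f1' * supn T f2 * opn (comm H1 (comm H1 H2))
   + 1/48 * supn T f1 * supn T f2 * supn T f2' * opn (comm H2 (comm H1 H2))"

definition gamma_s2 :: "real \<Rightarrow> (real\<Rightarrow>real) \<Rightarrow> (real\<Rightarrow>real) \<Rightarrow> (real\<Rightarrow>real) \<Rightarrow> (real\<Rightarrow>real) \<Rightarrow> (real\<Rightarrow>real) \<Rightarrow> (real\<Rightarrow>real) \<Rightarrow> complex^'n^'n \<Rightarrow> complex^'n^'n \<Rightarrow> real" where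
  "gamma_s2 T f1 f1' f1'' f2 f2' f2'' H1 H2 =
     1/960 * (supn T f1')^2 * supn T f2 * opn (comm H1 (comm H1 H2))
   + 1/480 * supn T f1 * (supn T f2')^2 * opn (comm H2 (comm H1 H2))"

definition alpha_g2 :: "real \<Rightarrow> (real\<Rightarrow>real) \<Rightarrow> (real\<Rightarrow>real) \<Rightarrow> (real\<Rightarrow>real) \<Rightarrow> (real\<Rightarrow>real) \<Rightarrow> (real\<Rightarrow>real) \<Rightarrow> (real\<Rightarrow>real) \<Rightarrow> complex^'n^'n \<Rightarrow> complex^'n^'n \<Rightarrow> real" where
  "alpha_g2 T f1 f1' f1'' f2 f2' f2'' H1 H2 =
     (7/12 * supn T f1 * supn T f2' + 11/24 * supn T f1' * supn T f2) * opn (comm H1 H2)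
   + 3/8 * (supn T f1)^2 * supn T f2 * opn (comm H1 (comm H1 H2))
   + 1/12 * supn T f1 * (supn T f2)^2 * opn (comm H2 (comm H2 H1))"

end

theory Submission
  imports Defs
begin

text \<open>
  Write \<open>Ki = -\<i> Hi\<close>; as \<open>Hi\<close> is Hermitian, every \<open>exp (s Ki)\<close> is a contraction. A Trotter step
  of length \<open>h\<close> starting at \<open>t0\<close> is the endpoint of a path
  \<open>V t = exp (a t K1) exp (b t K2) exp (c t K1)\<close> whose exponents grow from \<open>0\<close>. Its defect
  \<open>V' - (f1 K1 + f2 K2) V\<close> equals \<open>exp (a K1) D exp (b K2) exp (c K1)\<close>, and \<open>D\<close> is small: the
  conjugations \<open>exp (s K) Y exp (-s K)\<close> are expanded to first or second order in commutators and
  the scalar coefficients are controlled by Taylor expansions of \<open>f1\<close>, \<open>f2\<close> or of their primitives,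
  which gives \<open>norm D = O(h\<^sup>k)\<close> with \<open>k = 1\<close> resp. \<open>k = 2\<close>. Since the exact generator is skew,
  the error \<open>e = V W - U\<close> obeys \<open>d norm e / dt \<le> norm D\<close> for any contraction \<open>W\<close>, so each step
  adds at most \<open>O(h\<^sup>k\<^sup>+\<^sup>1)\<close> to the error, and the \<open>L = T / h\<close> steps add up to \<open>O(T\<^sup>k\<^sup>+\<^sup>1 / L\<^sup>k)\<close>.
\<close>

section \<open>Calculus on intervals\<close>

lemma differentiable_bound_Icc:
  fixes f :: "real \<Rightarrow> 'a::real_normed_vector"
  assumes "a \<le> b"
    and f': "\<And>t. t \<in> {a..b} \<Longrightarrow> (f has_vector_derivative f' t) (at t within {a..b})"
    and g': "\<And>t. t \<in> {a..b} \<Longrightarrow> (g has_real_derivative g' t) (at t within {a..b})"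
    and bound: "\<And>t. t \<in> {a..b} \<Longrightarrow> norm (f' t) \<le> g' t"
  shows "norm (f b - f a) \<le> g b - g a"
proof (cases "a = b")
  case False
  with \<open>a \<le> b\<close> have "a < b" by simp
  have g'v: "(g has_vector_derivative g' t) (at t within {a..b})" if "t \<in> {a..b}" for t
    using g'[OF that] by (simp add: has_real_derivative_iff_has_vector_derivative)
  show ?thesis
  proof (rule differentiable_bound_general[OF \<open>a < b\<close>])
    show "continuous_on {a..b} f" using f' by (rule continuous_on_vector_derivative)
    show "continuous_on {a..b} g" using g'v by (rule continuous_on_vector_derivative)
    fix t assume t: "a < t" "t < b"
    then show "(f has_vector_derivative f' t) (at t)" "(g has_vector_derivative g' t) (at t)"
      using f'[of t] g'v[of t] by (simp_all add: at_within_Icc_at[OF t])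
    show "norm (f' t) \<le> g' t" using bound t by simp
  qed
qed simp

lemma norm_increment_le_power:
  fixes f :: "real \<Rightarrow> 'a::real_normed_vector"
  assumes f': "\<And>\<sigma>. (f has_vector_derivative f' \<sigma>) (at \<sigma>)"
    and bound: "\<And>\<sigma>. norm (f' \<sigma>) \<le> C * \<bar>\<sigma>\<bar> ^ k"
  shows "norm (f s - f 0) \<le> C * \<bar>s\<bar> ^ Suc k / Suc k"
proof -
  have nonneg: "norm (g s - g 0) \<le> C * s ^ Suc k / Suc k"
    if "0 \<le> s" and g': "\<And>\<sigma>. (g has_vector_derivative g' \<sigma>) (at \<sigma>)"
      and "\<And>\<sigma>. norm (g' \<sigma>) \<le> C * \<bar>\<sigma>\<bar> ^ k" for g g' s
  proof -
    have "norm (g s - g 0) \<le> C * s ^ Suc k / Suc k - C * 0 ^ Suc k / Suc k"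
    proof (rule differentiable_bound_Icc[OF \<open>0 \<le> s\<close>, where f' = g' and g' = "\<lambda>\<sigma>. C * \<sigma> ^ k"])
      fix t assume "t \<in> {0..s}"
      then show "norm (g' t) \<le> C * t ^ k" using that(3)[of t] by simp
      show "(g has_vector_derivative g' t) (at t within {0..s})"
        by (rule has_vector_derivative_at_within[OF g'])
      show "((\<lambda>\<sigma>. C * \<sigma> ^ Suc k / Suc k) has_real_derivative C * t ^ k) (at t within {0..s})"
        by (auto intro!: derivative_eq_intros simp del: of_nat_Suc power_Suc)
    qed
    then show ?thesis by simp
  qed
  show ?thesis
  proof (cases "0 \<le> s")
    case True
    then show ?thesis using nonneg[OF True f' bound] by simp
  next
    case False
    have d: "((\<lambda>\<sigma>. f (- \<sigma>)) has_vector_derivative - f' (- \<sigma>)) (at \<sigma>)" for \<sigma>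
      using vector_diff_chain_at[OF has_vector_derivative_minus[OF has_vector_derivative_id] f']
      by (simp add: o_def)
    have "norm (- f' (- \<sigma>)) \<le> C * \<bar>\<sigma>\<bar> ^ k" for \<sigma>
      using bound[of "- \<sigma>"] by simp
    from nonneg[of "- s", OF _ d this] False show ?thesis by simp
  qed
qed

lemma abs_increment_le:
  fixes f :: "real \<Rightarrow> real"
  assumes d: "\<And>t. t \<in> I \<Longrightarrow> (f has_real_derivative f' t) (at t within I)"
    and bound: "\<And>t. t \<in> I \<Longrightarrow> \<bar>f' t\<bar> \<le> D"
    and sub: "{u..v} \<subseteq> I" and "u \<le> v"
  shows "\<bar>f v - f u\<bar> \<le> D * (v - u)"
proof -
  have "norm (f v - f u) \<le> D * v - D * u"
  proof (rule differentiable_bound_Icc[OF \<open>u \<le> v\<close>, where f' = f' and g' = "\<lambda>_. D"])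
    fix t assume t: "t \<in> {u..v}"
    show "(f has_vector_derivative f' t) (at t within {u..v})"
      using has_field_derivative_subset[OF d sub] t sub
      by (auto simp: has_real_derivative_iff_has_vector_derivative)
    show "((*) D has_real_derivative D) (at t within {u..v})"
      by (auto intro!: derivative_eq_intros)
    show "norm (f' t) \<le> D" using bound t sub by auto
  qed
  then show ?thesis by (simp add: algebra_simps)
qed

lemma abs_remainder_left_le:
  fixes f :: "real \<Rightarrow> real"
  assumes d: "\<And>t. t \<in> I \<Longrightarrow> (f has_real_derivative f' t) (at t within I)"
    and d': "\<And>t. t \<in> I \<Longrightarrow> (f' has_real_derivative f'' t) (at t within I)"
    and bound: "\<And>t. t \<in> I \<Longrightarrow> \<bar>f'' t\<bar> \<le> Q"
    and sub: "{u..v} \<subseteq> I" and "u \<le> v"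
  shows "\<bar>f v - f u - (v - u) * f' u\<bar> \<le> Q * (v - u)\<^sup>2 / 2"
proof -
  have "norm ((f v - (v - u) * f' u) - (f u - (u - u) * f' u)) \<le> Q * (v - u)\<^sup>2 / 2 - Q * (u - u)\<^sup>2 / 2"
  proof (rule differentiable_bound_Icc[OF \<open>u \<le> v\<close>, where f' = "\<lambda>t. f' t - f' u" and g' = "\<lambda>t. Q * (t - u)"])
    fix t assume t: "t \<in> {u..v}"
    show "((\<lambda>t. f t - (t - u) * f' u) has_vector_derivative f' t - f' u) (at t within {u..v})"
      using has_field_derivative_subset[OF d sub] t sub unfolding has_real_derivative_iff_has_vector_derivative[symmetric]
      by (auto intro!: derivative_eq_intros)
    show "((\<lambda>t. Q * (t - u)\<^sup>2 / 2) has_real_derivative Q * (t - u)) (at t within {u..v})"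
      by (auto intro!: derivative_eq_intros)
    have "{u..t} \<subseteq> I" using sub t by auto
    from abs_increment_le[OF d' bound this] t show "norm (f' t - f' u) \<le> Q * (t - u)" by simp
  qed
  then show ?thesis by (simp add: algebra_simps)
qed

lemma abs_remainder_right_le:
  fixes f :: "real \<Rightarrow> real"
  assumes d: "\<And>t. t \<in> I \<Longrightarrow> (f has_real_derivative f' t) (at t within I)"
    and d': "\<And>t. t \<in> I \<Longrightarrow> (f' has_real_derivative f'' t) (at t within I)"
    and bound: "\<And>t. t \<in> I \<Longrightarrow> \<bar>f'' t\<bar> \<le> Q"
    and sub: "{u..v} \<subseteq> I" and "u \<le> v"
  shows "\<bar>f v - f u - (v - u) * f' v\<bar> \<le> Q * (v - u)\<^sup>2 / 2"
proof -
  have "norm ((f v - (v - v) * f' v) - (f u - (u - v) * f' v)) \<le> - Q * (v - v)\<^sup>2 / 2 - - Q * (v - u)\<^sup>2 / 2"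
  proof (rule differentiable_bound_Icc[OF \<open>u \<le> v\<close>, where f' = "\<lambda>t. f' t - f' v" and g' = "\<lambda>t. Q * (v - t)"])
    fix t assume t: "t \<in> {u..v}"
    show "((\<lambda>t. f t - (t - v) * f' v) has_vector_derivative f' t - f' v) (at t within {u..v})"
      using has_field_derivative_subset[OF d sub] t sub unfolding has_real_derivative_iff_has_vector_derivative[symmetric]
      by (auto intro!: derivative_eq_intros)
    show "((\<lambda>t. - Q * (v - t)\<^sup>2 / 2) has_real_derivative Q * (v - t)) (at t within {u..v})"
      by (auto intro!: derivative_eq_intros simp: field_simps)
    have "{t..v} \<subseteq> I" using sub t by auto
    from abs_increment_le[OF d' bound this] t show "norm (f' t - f' v) \<le> Q * (v - t)"
      by (simp add: abs_minus_commute)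
  qed
  then show ?thesis by (simp add: algebra_simps)
qed

lemma integral_has_real_derivative_Icc:
  fixes f :: "real \<Rightarrow> real"
  assumes "continuous_on {a..b} f" and "t \<in> {a..b}"
  shows "((\<lambda>t. integral {a..t} f) has_real_derivative f t) (at t within {a..b})"
  using integral_has_vector_derivative[OF assms] by (simp add: has_real_derivative_iff_has_vector_derivative)

lemma integral_Icc_eq_diff:
  fixes f :: "real \<Rightarrow> real"
  assumes "continuous_on {a..b} f" and "a \<le> u" "u \<le> v" "v \<le> b"
  shows "integral {u..v} f = integral {a..v} f - integral {a..u} f"
proof -
  have "f integrable_on {a..v}"
    by (rule integrable_continuous_interval[OF continuous_on_subset[OF assms(1)]]) (use assms in auto)
  from Henstock_Kurzweil_Integration.integral_combine[OF assms(2,3) this] show ?thesis by simp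
qed

lemma has_real_derivative_midpoint:
  fixes f :: "real \<Rightarrow> real"
  assumes d: "\<And>t. t \<in> I \<Longrightarrow> (f has_real_derivative f' t) (at t within I)"
    and sub: "(\<lambda>t. (t + t0) / 2) ` S \<subseteq> I" and t: "t \<in> S"
  shows "((\<lambda>t. f ((t + t0) / 2)) has_real_derivative f' ((t + t0) / 2) / 2) (at t within S)"
proof -
  have m: "((\<lambda>t. (t + t0) / 2) has_real_derivative 1 / 2) (at t within S)"
    by (auto intro!: derivative_eq_intros)
  have "(f has_real_derivative f' ((t + t0) / 2)) (at ((t + t0) / 2) within (\<lambda>t. (t + t0) / 2) ` S)"
    by (rule has_field_derivative_subset[OF d sub]) (use sub t in auto)
  from DERIV_image_chain[OF this m] show ?thesis by (simp add: o_def)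
qed

section \<open>Conjugation by exponentials in Banach algebras\<close>

definition commutator :: "'a::ring \<Rightarrow> 'a \<Rightarrow> 'a" where
  "commutator X Y = X * Y - Y * X"

lemma norm_mult_le_one:
  fixes A B :: "'a::real_normed_algebra"
  assumes "norm A \<le> 1" and "norm B \<le> 1"
  shows "norm (A * B) \<le> 1"
  using norm_mult_ineq[of A B] mult_le_one[OF assms(1) norm_ge_zero assms(2)] by linarith

lemma norm_sandwich_le:
  fixes A B X :: "'a::real_normed_algebra"
  assumes "norm A \<le> 1" and "norm B \<le> 1"
  shows "norm (A * X * B) \<le> norm X"
proof -
  have "norm (A * X * B) \<le> norm A * norm X * norm B"
    by (meson norm_mult_ineq mult_right_mono norm_ge_zero order_trans)
  also have "\<dots> \<le> 1 * norm X * 1"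
    using assms by (intro mult_mono) simp_all
  finally show ?thesis by simp
qed

lemma exp_conj_has_vector_derivative:
  fixes K Y :: "'a::{real_normed_algebra_1,banach}"
  shows "((\<lambda>\<sigma>. exp (\<sigma> *\<^sub>R K) * Y * exp ((- \<sigma>) *\<^sub>R K)) has_vector_derivative
           exp (\<sigma> *\<^sub>R K) * commutator K Y * exp ((- \<sigma>) *\<^sub>R K)) (at \<sigma>)"
proof -
  have minus: "exp ((- \<sigma>) *\<^sub>R K) = exp (\<sigma> *\<^sub>R (- K))" for \<sigma> by simp
  have "((\<lambda>\<sigma>. exp (\<sigma> *\<^sub>R K) * Y * exp (\<sigma> *\<^sub>R (- K))) has_vector_derivative
          exp (\<sigma> *\<^sub>R K) * Y * (- K * exp (\<sigma> *\<^sub>R (- K))) + K * exp (\<sigma> *\<^sub>R K) * Y * exp (\<sigma> *\<^sub>R (- K))) (at \<sigma>)"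
    by (intro has_vector_derivative_mult has_vector_derivative_mult_left
        exp_scaleR_has_vector_derivative_left)
  also have "exp (\<sigma> *\<^sub>R K) * Y * (- K * exp (\<sigma> *\<^sub>R (- K))) + K * exp (\<sigma> *\<^sub>R K) * Y * exp (\<sigma> *\<^sub>R (- K))
      = exp (\<sigma> *\<^sub>R K) * commutator K Y * exp (\<sigma> *\<^sub>R (- K))"
    by (simp only: exp_times_scaleR_commute[symmetric, where t = \<sigma> and A = K]) (simp add: commutator_def algebra_simps)
  finally show ?thesis unfolding minus .
qed

lemma norm_exp_conj_sub_le:
  fixes K Y :: "'a::{real_normed_algebra_1,banach}"
  assumes contr: "\<And>s. norm (exp (s *\<^sub>R K)) \<le> 1"
  shows "norm (exp (s *\<^sub>R K) * Y * exp ((- s) *\<^sub>R K) - Y) \<le> \<bar>s\<bar> * norm (commutator K Y)"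
proof -
  have "norm (exp (\<sigma> *\<^sub>R K) * commutator K Y * exp ((- \<sigma>) *\<^sub>R K)) \<le> norm (commutator K Y) * \<bar>\<sigma>\<bar> ^ 0" for \<sigma>
    using norm_sandwich_le[OF contr contr, of \<sigma> "commutator K Y" "- \<sigma>"] by simp
  from norm_increment_le_power[OF exp_conj_has_vector_derivative this] show ?thesis
    by (simp add: mult.commute)
qed

lemma norm_exp_conj_sub_linear_le:
  fixes K Y :: "'a::{real_normed_algebra_1,banach}"
  assumes contr: "\<And>s. norm (exp (s *\<^sub>R K)) \<le> 1"
  shows "norm (exp (s *\<^sub>R K) * Y * exp ((- s) *\<^sub>R K) - Y - s *\<^sub>R commutator K Y)
           \<le> s\<^sup>2 / 2 * norm (commutator K (commutator K Y))"
proof -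
  have d: "((\<lambda>\<sigma>. exp (\<sigma> *\<^sub>R K) * Y * exp ((- \<sigma>) *\<^sub>R K) - Y - \<sigma> *\<^sub>R commutator K Y) has_vector_derivative
          exp (\<sigma> *\<^sub>R K) * commutator K Y * exp ((- \<sigma>) *\<^sub>R K) - commutator K Y) (at \<sigma>)" for \<sigma>
    using has_vector_derivative_diff[OF has_vector_derivative_diff[OF exp_conj_has_vector_derivative
        has_vector_derivative_const] has_vector_derivative_scaleR[OF DERIV_ident has_vector_derivative_const]]
    by simp
  have b: "norm (exp (\<sigma> *\<^sub>R K) * commutator K Y * exp ((- \<sigma>) *\<^sub>R K) - commutator K Y)
      \<le> norm (commutator K (commutator K Y)) * \<bar>\<sigma>\<bar> ^ 1" for \<sigma>
    using norm_exp_conj_sub_le[OF contr] by (simp add: mult.commute)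
  from norm_increment_le_power[OF d b, of s] show ?thesis
    by (simp add: mult.commute power2_eq_square)
qed

lemma has_vector_derivative_exp_scaleR:
  fixes K :: "'a::{real_normed_algebra_1,banach}"
  assumes "(a has_real_derivative a') (at t within S)"
  shows "((\<lambda>t. exp (a t *\<^sub>R K)) has_vector_derivative a' *\<^sub>R (K * exp (a t *\<^sub>R K))) (at t within S)"
  using vector_diff_chain_within[OF assms[unfolded has_real_derivative_iff_has_vector_derivative]
      has_vector_derivative_at_within[OF exp_scaleR_has_vector_derivative_left]]
  by (simp add: o_def)

section \<open>Approximate propagators\<close>

definition approx_propagator :: "(real \<Rightarrow> 'a::real_normed_algebra_1) \<Rightarrow> real \<Rightarrow> real \<Rightarrow> real \<Rightarrow> 'a \<Rightarrow> bool" where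
  "approx_propagator G t0 t1 \<delta> S \<longleftrightarrow>
     (\<exists>V V' p P. V t0 = 1 \<and> V t1 = S \<and> P t1 - P t0 \<le> \<delta> \<and>
        (\<forall>t\<in>{t0..t1}. (V has_vector_derivative V' t) (at t within {t0..t1})
           \<and> norm (V' t - G t * V t) \<le> p t \<and> (P has_real_derivative p t) (at t within {t0..t1})))"

lemma approx_propagator_mono:
  "approx_propagator G t0 t1 \<delta> S \<Longrightarrow> \<delta> \<le> \<delta>' \<Longrightarrow> approx_propagator G t0 t1 \<delta>' S"
  unfolding approx_propagator_def by (blast intro: order_trans)

lemma exp_product_defect_eq:
  fixes K1 K2 :: "'a::{real_normed_algebra_1,banach}" and a b c :: real
  defines "A \<equiv> exp (a *\<^sub>R K1)" and "B \<equiv> exp (b *\<^sub>R K2)" and "C \<equiv> exp (c *\<^sub>R K1)"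
  shows "A * B * (c' *\<^sub>R (K1 * C)) + (A * (b' *\<^sub>R (K2 * B)) + (a' *\<^sub>R (K1 * A)) * B) * C
           - (f1 *\<^sub>R K1 + f2 *\<^sub>R K2) * (A * B * C)
         = A * ((a' + c' - f1) *\<^sub>R K1 + (b' - f2) *\<^sub>R K2
                + c' *\<^sub>R (B * K1 * exp ((- b) *\<^sub>R K2) - K1)
                - f2 *\<^sub>R (exp ((- a) *\<^sub>R K1) * K2 * A - K2)) * (B * C)"
proof -
  have commute: "K1 * A = A * K1" "K1 * (A * X) = A * (K1 * X)" for X
    unfolding A_def by (simp_all add: exp_times_scaleR_commute mult.assoc[symmetric])
  have inverse: "A * (exp (- (a *\<^sub>R K1)) * X) = X" "exp (- (b *\<^sub>R K2)) * (B * X) = X" for X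
    unfolding A_def B_def using exp_minus_inverse[of "a *\<^sub>R K1"] exp_minus_inverse[of "- (b *\<^sub>R K2)"]
    by (simp_all add: mult.assoc[symmetric])
  show ?thesis
    by (simp add: algebra_simps commute inverse)
qed

text \<open>For \<open>V = exp (a K1) exp (b K2) exp (c K1)\<close> with \<open>c' = cm + cr\<close> this bounds the defect
  \<open>V' - (g1 K1 + g2 K2) V\<close>: the conjugate of \<open>K1\<close> by \<open>exp (b K2)\<close> is expanded to second order
  against \<open>cm\<close> but only to first order against the remainder \<open>cr\<close>.\<close>

definition defect_bound ::
    "'a::real_normed_algebra \<Rightarrow> 'a \<Rightarrow> real \<Rightarrow> real \<Rightarrow> real \<Rightarrow> real \<Rightarrow> real \<Rightarrow> real \<Rightarrow> real \<Rightarrow> real \<Rightarrow> real"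
  where
  "defect_bound K1 K2 g1 g2 a b a' b' cm cr =
     \<bar>a' + (cm + cr) - g1\<bar> * norm K1 + \<bar>b' - g2\<bar> * norm K2
     + \<bar>cm * b - g2 * a\<bar> * norm (commutator K2 K1) + \<bar>cr * b\<bar> * norm (commutator K2 K1)
     + \<bar>cm\<bar> * (b\<^sup>2 / 2 * norm (commutator K2 (commutator K2 K1)))
     + \<bar>g2\<bar> * (a\<^sup>2 / 2 * norm (commutator K1 (commutator K1 K2)))"

lemma norm_exp_product_defect_le:
  fixes K1 K2 :: "'a::{real_normed_algebra_1,banach}"
  assumes contr1: "\<And>s. norm (exp (s *\<^sub>R K1)) \<le> 1" and contr2: "\<And>s. norm (exp (s *\<^sub>R K2)) \<le> 1"
  shows "norm ((a' + (cm + cr) - g1) *\<^sub>R K1 + (b' - g2) *\<^sub>R K2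
                + (cm + cr) *\<^sub>R (exp (b *\<^sub>R K2) * K1 * exp ((- b) *\<^sub>R K2) - K1)
                - g2 *\<^sub>R (exp ((- a) *\<^sub>R K1) * K2 * exp (a *\<^sub>R K1) - K2))
         \<le> defect_bound K1 K2 g1 g2 a b a' b' cm cr"
proof -
  define ad2 where "ad2 = exp (b *\<^sub>R K2) * K1 * exp ((- b) *\<^sub>R K2) - K1"
  define ad1 where "ad1 = exp ((- a) *\<^sub>R K1) * K2 * exp (a *\<^sub>R K1) - K2"
  define r2 where "r2 = ad2 - b *\<^sub>R commutator K2 K1"
  define r1 where "r1 = ad1 - (- a) *\<^sub>R commutator K1 K2"
  have ad2: "norm ad2 \<le> \<bar>b\<bar> * norm (commutator K2 K1)"
    unfolding ad2_def by (rule norm_exp_conj_sub_le[OF contr2])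
  have r2: "norm r2 \<le> b\<^sup>2 / 2 * norm (commutator K2 (commutator K2 K1))"
    unfolding r2_def ad2_def by (rule norm_exp_conj_sub_linear_le[OF contr2])
  have r1: "norm r1 \<le> a\<^sup>2 / 2 * norm (commutator K1 (commutator K1 K2))"
    using norm_exp_conj_sub_linear_le[OF contr1, of "- a" K2] by (simp add: r1_def ad1_def)
  define x3 where "x3 = (cm * b - g2 * a) *\<^sub>R commutator K2 K1"
  have "(a' + (cm + cr) - g1) *\<^sub>R K1 + (b' - g2) *\<^sub>R K2 + (cm + cr) *\<^sub>R ad2 - g2 *\<^sub>R ad1
      = (a' + (cm + cr) - g1) *\<^sub>R K1 + (b' - g2) *\<^sub>R K2 + x3 + cr *\<^sub>R ad2 + cm *\<^sub>R r2 - g2 *\<^sub>R r1"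
    by (simp add: x3_def r1_def r2_def commutator_def algebra_simps)
  also have "norm \<dots> \<le> norm ((a' + (cm + cr) - g1) *\<^sub>R K1) + norm ((b' - g2) *\<^sub>R K2) + norm x3
      + norm (cr *\<^sub>R ad2) + norm (cm *\<^sub>R r2) + norm (g2 *\<^sub>R r1)"
    by (smt (verit) norm_triangle_ineq norm_triangle_ineq4)
  also have "\<dots> \<le> defect_bound K1 K2 g1 g2 a b a' b' cm cr"
    unfolding defect_bound_def x3_def norm_scaleR using ad2 r1 r2
    by (intro add_mono order_refl mult_left_mono) (auto simp: abs_mult mult.assoc intro: mult_left_mono)
  finally show ?thesis by (simp only: ad1_def ad2_def)
qed

lemma approx_propagator_exp_product:
  fixes K1 K2 :: "'a::{real_normed_algebra_1,banach}"
  assumes contr1: "\<And>s. norm (exp (s *\<^sub>R K1)) \<le> 1" and contr2: "\<And>s. norm (exp (s *\<^sub>R K2)) \<le> 1"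
    and init: "a t0 = 0" "b t0 = 0" "c t0 = 0"
    and da: "\<And>t. t \<in> {t0..t1} \<Longrightarrow> (a has_real_derivative a' t) (at t within {t0..t1})"
    and db: "\<And>t. t \<in> {t0..t1} \<Longrightarrow> (b has_real_derivative b' t) (at t within {t0..t1})"
    and dc: "\<And>t. t \<in> {t0..t1} \<Longrightarrow> (c has_real_derivative cm t + cr t) (at t within {t0..t1})"
    and defect: "\<And>t. t \<in> {t0..t1} \<Longrightarrow>
           defect_bound K1 K2 (f1 t) (f2 t) (a t) (b t) (a' t) (b' t) (cm t) (cr t) \<le> p t"
    and dP: "\<And>t. t \<in> {t0..t1} \<Longrightarrow> (P has_real_derivative p t) (at t within {t0..t1})"
  shows "approx_propagator (\<lambda>t. f1 t *\<^sub>R K1 + f2 t *\<^sub>R K2) t0 t1 (P t1 - P t0)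
           (exp (a t1 *\<^sub>R K1) * exp (b t1 *\<^sub>R K2) * exp (c t1 *\<^sub>R K1))"
  unfolding approx_propagator_def
proof (intro exI conjI ballI)
  define A where "A = (\<lambda>t. exp (a t *\<^sub>R K1))"
  define B where "B = (\<lambda>t. exp (b t *\<^sub>R K2))"
  define C where "C = (\<lambda>t. exp (c t *\<^sub>R K1))"
  define V' where "V' = (\<lambda>t. A t * B t * ((cm t + cr t) *\<^sub>R (K1 * C t))
                          + (A t * (b' t *\<^sub>R (K2 * B t)) + (a' t *\<^sub>R (K1 * A t)) * B t) * C t)"
  let ?V = "\<lambda>t. A t * B t * C t"
  show "?V t0 = 1" "?V t1 = exp (a t1 *\<^sub>R K1) * exp (b t1 *\<^sub>R K2) * exp (c t1 *\<^sub>R K1)"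
    by (simp_all add: A_def B_def C_def init)
  show "P t1 - P t0 \<le> P t1 - P t0" ..
  fix t assume t: "t \<in> {t0..t1}"
  show "(?V has_vector_derivative V' t) (at t within {t0..t1})"
    unfolding V'_def A_def B_def C_def
    by (intro has_vector_derivative_mult has_vector_derivative_exp_scaleR da db dc t)
  have "norm (V' t - (f1 t *\<^sub>R K1 + f2 t *\<^sub>R K2) * ?V t)
      = norm (A t * ((a' t + (cm t + cr t) - f1 t) *\<^sub>R K1 + (b' t - f2 t) *\<^sub>R K2
                + (cm t + cr t) *\<^sub>R (B t * K1 * exp ((- b t) *\<^sub>R K2) - K1)
                - f2 t *\<^sub>R (exp ((- a t) *\<^sub>R K1) * K2 * A t - K2)) * (B t * C t))"
    unfolding V'_def A_def B_def C_def by (simp only: exp_product_defect_eq)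
  also have "\<dots> \<le> norm ((a' t + (cm t + cr t) - f1 t) *\<^sub>R K1 + (b' t - f2 t) *\<^sub>R K2
                + (cm t + cr t) *\<^sub>R (B t * K1 * exp ((- b t) *\<^sub>R K2) - K1)
                - f2 t *\<^sub>R (exp ((- a t) *\<^sub>R K1) * K2 * A t - K2))"
  proof (rule norm_sandwich_le)
    show "norm (A t) \<le> 1" unfolding A_def by (rule contr1)
    have "norm (B t * C t) \<le> norm (B t) * norm (C t)" by (rule norm_mult_ineq)
    also have "\<dots> \<le> 1" unfolding B_def C_def by (intro mult_le_one contr1 contr2) simp
    finally show "norm (B t * C t) \<le> 1" .
  qed
  also have "\<dots> \<le> p t"
    unfolding A_def B_def using norm_exp_product_defect_le[OF contr1 contr2] defect[OF t]
    by (rule order_trans)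
  finally show "norm (V' t - (f1 t *\<^sub>R K1 + f2 t *\<^sub>R K2) * ?V t) \<le> p t" .
  show "(P has_real_derivative p t) (at t within {t0..t1})" by (rule dP[OF t])
qed

locale trotter_bounds =
  fixes K1 K2 :: "'a::{real_normed_algebra_1,banach}"
    and f1 f1' f2 f2' :: "real \<Rightarrow> real"
    and T M1 D1 M2 D2 n1 n2 c12 c112 c221 :: real
  assumes contr1: "\<And>s. norm (exp (s *\<^sub>R K1)) \<le> 1" and contr2: "\<And>s. norm (exp (s *\<^sub>R K2)) \<le> 1"
    and d1: "\<And>t. t \<in> {0..T} \<Longrightarrow> (f1 has_real_derivative f1' t) (at t within {0..T})"
    and d2: "\<And>t. t \<in> {0..T} \<Longrightarrow> (f2 has_real_derivative f2' t) (at t within {0..T})"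
    and M1: "\<And>t. t \<in> {0..T} \<Longrightarrow> \<bar>f1 t\<bar> \<le> M1" and D1: "\<And>t. t \<in> {0..T} \<Longrightarrow> \<bar>f1' t\<bar> \<le> D1"
    and M2: "\<And>t. t \<in> {0..T} \<Longrightarrow> \<bar>f2 t\<bar> \<le> M2" and D2: "\<And>t. t \<in> {0..T} \<Longrightarrow> \<bar>f2' t\<bar> \<le> D2"
    and n1: "norm K1 \<le> n1" and n2: "norm K2 \<le> n2" and c12: "norm (commutator K2 K1) \<le> c12"
    and c112: "norm (commutator K1 (commutator K1 K2)) \<le> c112"
    and c221: "norm (commutator K2 (commutator K2 K1)) \<le> c221"
begin

lemma bounds_nonneg:
  assumes "0 \<le> T"
  shows "0 \<le> M1" "0 \<le> D1" "0 \<le> M2" "0 \<le> D2" "0 \<le> n1" "0 \<le> n2" "0 \<le> c12" "0 \<le> c112" "0 \<le> c221"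
  using M1[of 0] D1[of 0] M2[of 0] D2[of 0] assms order_trans[OF norm_ge_zero n1]
    order_trans[OF norm_ge_zero n2] order_trans[OF norm_ge_zero c12]
    order_trans[OF norm_ge_zero c112] order_trans[OF norm_ge_zero c221]
  by auto

lemma defect_bound_le:
  assumes X1: "\<bar>a' + (cm + cr) - g1\<bar> \<le> X1" and X2: "\<bar>b' - g2\<bar> \<le> X2"
    and X3: "\<bar>cm * b - g2 * a\<bar> \<le> X3" and X4: "\<bar>cr * b\<bar> \<le> X4"
    and Y: "\<bar>cm\<bar> \<le> Y" and Z: "\<bar>b\<bar> \<le> Z" and Y': "\<bar>g2\<bar> \<le> Y'" and Z': "\<bar>a\<bar> \<le> Z'"
  shows "defect_bound K1 K2 g1 g2 a b a' b' cm cr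
         \<le> X1 * n1 + X2 * n2 + X3 * c12 + X4 * c12 + Y * (Z\<^sup>2 / 2 * c221) + Y' * (Z'\<^sup>2 / 2 * c112)"
proof -
  note abs_nonneg = order_trans[OF abs_ge_zero]
  have "b\<^sup>2 / 2 * norm (commutator K2 (commutator K2 K1)) \<le> Z\<^sup>2 / 2 * c221"
    using power_mono[OF Z abs_ge_zero, of 2] c221 by (intro mult_mono) auto
  then have 5: "\<bar>cm\<bar> * (b\<^sup>2 / 2 * norm (commutator K2 (commutator K2 K1))) \<le> Y * (Z\<^sup>2 / 2 * c221)"
    using abs_nonneg[OF Y] by (intro mult_mono[OF Y]) auto
  have "a\<^sup>2 / 2 * norm (commutator K1 (commutator K1 K2)) \<le> Z'\<^sup>2 / 2 * c112"
    using power_mono[OF Z' abs_ge_zero, of 2] c112 by (intro mult_mono) auto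
  then have 6: "\<bar>g2\<bar> * (a\<^sup>2 / 2 * norm (commutator K1 (commutator K1 K2))) \<le> Y' * (Z'\<^sup>2 / 2 * c112)"
    using abs_nonneg[OF Y'] by (intro mult_mono[OF Y']) auto
  have "\<bar>a' + (cm + cr) - g1\<bar> * norm K1 \<le> X1 * n1" "\<bar>b' - g2\<bar> * norm K2 \<le> X2 * n2"
    "\<bar>cm * b - g2 * a\<bar> * norm (commutator K2 K1) \<le> X3 * c12" "\<bar>cr * b\<bar> * norm (commutator K2 K1) \<le> X4 * c12"
    using abs_nonneg[OF X1] abs_nonneg[OF X2] abs_nonneg[OF X3] abs_nonneg[OF X4]
    by (intro mult_mono X1 X2 X3 X4 n1 n2 c12; simp)+
  with 5 6 show ?thesis unfolding defect_bound_def by linarith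
qed

lemma approx_propagator_s1:
  assumes t0: "0 \<le> t0" and h: "0 \<le> h" and t1: "t0 + h \<le> T"
  shows "approx_propagator (\<lambda>t. f1 t *\<^sub>R K1 + f2 t *\<^sub>R K2) t0 (t0 + h)
           ((D1 * n1 + D2 * n2 + M1 * M2 * c12) / 2 * h\<^sup>2)
           (exp ((f2 (t0 + h) * h) *\<^sub>R K2) * exp ((f1 (t0 + h) * h) *\<^sub>R K1))"
proof -
  define t1 where "t1 = t0 + h"
  define C where "C = D1 * n1 + D2 * n2"
  define P where "P = (\<lambda>t. - C * (t1 - t)\<^sup>2 / 2 + M1 * M2 * c12 * (t - t0)\<^sup>2 / 2)"
  have sub: "{t0..t1} \<subseteq> {0..T}" using t0 t1 by (auto simp: t1_def)
  have "0 \<le> T" using t0 h t1 by linarith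
  note nonneg = bounds_nonneg[OF this]
  have step: "approx_propagator (\<lambda>t. f1 t *\<^sub>R K1 + f2 t *\<^sub>R K2) t0 t1 (P t1 - P t0)
      (exp (0 *\<^sub>R K1) * exp (((t1 - t0) * f2 t1) *\<^sub>R K2) * exp (((t1 - t0) * f1 t1) *\<^sub>R K1))"
  proof (rule approx_propagator_exp_product[OF contr1 contr2, where a = "\<lambda>_. 0" and a' = "\<lambda>_. 0"
        and b = "\<lambda>t. (t - t0) * f2 t1" and b' = "\<lambda>_. f2 t1" and c = "\<lambda>t. (t - t0) * f1 t1"
        and cm = "\<lambda>_. 0" and cr = "\<lambda>_. f1 t1" and p = "\<lambda>t. C * (t1 - t) + M1 * M2 * c12 * (t - t0)"
        and P = P])
    fix t assume t: "t \<in> {t0..t1}"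
    have X1: "\<bar>0 + (0 + f1 t1) - f1 t\<bar> \<le> D1 * (t1 - t)" and X2: "\<bar>f2 t1 - f2 t\<bar> \<le> D2 * (t1 - t)"
      using abs_increment_le[OF d1 D1] abs_increment_le[OF d2 D2] sub t by auto
    have "\<bar>f1 t1\<bar> * \<bar>f2 t1\<bar> * (t - t0) \<le> M1 * M2 * (t - t0)"
      using M1[of t1] M2[of t1] nonneg t sub by (intro mult_right_mono mult_mono) auto
    then have X4: "\<bar>f1 t1 * ((t - t0) * f2 t1)\<bar> \<le> M1 * M2 * (t - t0)"
      using t by (simp add: abs_mult ac_simps)
    have "defect_bound K1 K2 (f1 t) (f2 t) 0 ((t - t0) * f2 t1) 0 (f2 t1) 0 (f1 t1)
        \<le> D1 * (t1 - t) * n1 + D2 * (t1 - t) * n2 + 0 * c12 + M1 * M2 * (t - t0) * c12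
          + 0 * (\<bar>(t - t0) * f2 t1\<bar>\<^sup>2 / 2 * c221) + M2 * (0\<^sup>2 / 2 * c112)"
      by (rule defect_bound_le[OF X1 X2 _ X4]) (use M2[of t] sub t in auto)
    then show "defect_bound K1 K2 (f1 t) (f2 t) 0 ((t - t0) * f2 t1) 0 (f2 t1) 0 (f1 t1)
        \<le> C * (t1 - t) + M1 * M2 * c12 * (t - t0)"
      by (simp add: C_def algebra_simps)
    show "(P has_real_derivative C * (t1 - t) + M1 * M2 * c12 * (t - t0)) (at t within {t0..t1})"
      unfolding P_def by (auto intro!: derivative_eq_intros simp: field_simps)
  qed (auto intro!: derivative_eq_intros)
  have increment: "P t1 - P t0 = (D1 * n1 + D2 * n2 + M1 * M2 * c12) / 2 * h\<^sup>2"
    by (simp add: P_def C_def t1_def field_simps)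
  have endpoint: "exp (0 *\<^sub>R K1) * exp (((t1 - t0) * f2 t1) *\<^sub>R K2) * exp (((t1 - t0) * f1 t1) *\<^sub>R K1)
      = exp ((f2 t1 * h) *\<^sub>R K2) * exp ((f1 t1 * h) *\<^sub>R K1)"
    by (simp add: t1_def mult.commute)
  show ?thesis using step unfolding increment endpoint unfolding t1_def .
qed

lemma approx_propagator_g1:
  assumes t0: "0 \<le> t0" and h: "0 \<le> h" and t1: "t0 + h \<le> T"
  shows "approx_propagator (\<lambda>t. f1 t *\<^sub>R K1 + f2 t *\<^sub>R K2) t0 (t0 + h) (M1 * M2 * c12 / 2 * h\<^sup>2)
           (exp (integral {t0..t0 + h} f2 *\<^sub>R K2) * exp (integral {t0..t0 + h} f1 *\<^sub>R K1))"
proof -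
  define t1 where "t1 = t0 + h"
  define F1 where "F1 = (\<lambda>t. integral {0..t} f1)"
  define F2 where "F2 = (\<lambda>t. integral {0..t} f2)"
  define P where "P = (\<lambda>t. M1 * M2 * c12 * (t - t0)\<^sup>2 / 2)"
  have sub: "{t0..t1} \<subseteq> {0..T}" using t0 t1 by (auto simp: t1_def)
  have "0 \<le> T" using t0 h t1 by linarith
  note nonneg = bounds_nonneg[OF this]
  have dF1: "(F1 has_real_derivative f1 t) (at t within {0..T})" if "t \<in> {0..T}" for t
    unfolding F1_def by (rule integral_has_real_derivative_Icc[OF DERIV_continuous_on[OF d1] that])
  have dF2: "(F2 has_real_derivative f2 t) (at t within {0..T})" if "t \<in> {0..T}" for t
    unfolding F2_def by (rule integral_has_real_derivative_Icc[OF DERIV_continuous_on[OF d2] that])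
  have step: "approx_propagator (\<lambda>t. f1 t *\<^sub>R K1 + f2 t *\<^sub>R K2) t0 t1 (P t1 - P t0)
      (exp (0 *\<^sub>R K1) * exp ((F2 t1 - F2 t0) *\<^sub>R K2) * exp ((F1 t1 - F1 t0) *\<^sub>R K1))"
  proof (rule approx_propagator_exp_product[OF contr1 contr2, where a = "\<lambda>_. 0" and a' = "\<lambda>_. 0"
        and b = "\<lambda>t. F2 t - F2 t0" and b' = f2 and c = "\<lambda>t. F1 t - F1 t0"
        and cm = "\<lambda>_. 0" and cr = f1 and p = "\<lambda>t. M1 * M2 * c12 * (t - t0)" and P = P])
    fix t assume t: "t \<in> {t0..t1}"
    have "\<bar>f1 t\<bar> * \<bar>F2 t - F2 t0\<bar> \<le> M1 * (M2 * (t - t0))"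
      using M1[of t] abs_increment_le[OF dF2 M2, of t0 t] nonneg sub t by (intro mult_mono) auto
    then have X4: "\<bar>f1 t * (F2 t - F2 t0)\<bar> \<le> M1 * (M2 * (t - t0))" by (simp add: abs_mult)
    have "defect_bound K1 K2 (f1 t) (f2 t) 0 (F2 t - F2 t0) 0 (f2 t) 0 (f1 t)
        \<le> 0 * n1 + 0 * n2 + 0 * c12 + M1 * (M2 * (t - t0)) * c12
          + 0 * (\<bar>F2 t - F2 t0\<bar>\<^sup>2 / 2 * c221) + M2 * (0\<^sup>2 / 2 * c112)"
      by (rule defect_bound_le[OF _ _ _ X4]) (use M2[of t] sub t in auto)
    then show "defect_bound K1 K2 (f1 t) (f2 t) 0 (F2 t - F2 t0) 0 (f2 t) 0 (f1 t)
        \<le> M1 * M2 * c12 * (t - t0)"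
      by (simp add: ac_simps)
    show "(P has_real_derivative M1 * M2 * c12 * (t - t0)) (at t within {t0..t1})"
      unfolding P_def by (auto intro!: derivative_eq_intros)
  next
    fix t assume t: "t \<in> {t0..t1}"
    then show "((\<lambda>t. F2 t - F2 t0) has_real_derivative f2 t) (at t within {t0..t1})"
      using has_field_derivative_subset[OF dF2 sub] sub by (auto intro!: derivative_eq_intros)
    show "((\<lambda>t. F1 t - F1 t0) has_real_derivative 0 + f1 t) (at t within {t0..t1})"
      using has_field_derivative_subset[OF dF1 sub] t sub by (auto intro!: derivative_eq_intros)
  qed auto
  have increment: "P t1 - P t0 = M1 * M2 * c12 / 2 * h\<^sup>2"
    by (simp add: P_def t1_def)
  have endpoint: "exp (0 *\<^sub>R K1) * exp ((F2 t1 - F2 t0) *\<^sub>R K2) * exp ((F1 t1 - F1 t0) *\<^sub>R K1)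
      = exp (integral {t0..t1} f2 *\<^sub>R K2) * exp (integral {t0..t1} f1 *\<^sub>R K1)"
    using integral_Icc_eq_diff[OF DERIV_continuous_on[OF d1], of t0 t1]
      integral_Icc_eq_diff[OF DERIV_continuous_on[OF d2], of t0 t1] t0 h t1
    by (simp add: F1_def F2_def t1_def)
  show ?thesis using step unfolding increment endpoint unfolding t1_def .
qed

lemma defect_bound_s2_le:
  assumes d1': "\<And>t. t \<in> {0..T} \<Longrightarrow> (f1' has_real_derivative f1'' t) (at t within {0..T})"
    and d2': "\<And>t. t \<in> {0..T} \<Longrightarrow> (f2' has_real_derivative f2'' t) (at t within {0..T})"
    and Q1: "\<And>t. t \<in> {0..T} \<Longrightarrow> \<bar>f1'' t\<bar> \<le> Q1" and Q2: "\<And>t. t \<in> {0..T} \<Longrightarrow> \<bar>f2'' t\<bar> \<le> Q2"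
    and t: "0 \<le> t0" "t0 \<le> t" "t \<le> T"
  defines "m \<equiv> (t + t0) / 2" and "\<tau> \<equiv> t - t0"
  shows "defect_bound K1 K2 (f1 t) (f2 t) (\<tau> / 2 * f1 m) (\<tau> * f2 m)
           (f1 m / 2 + \<tau> / 4 * f1' m) (f2 m + \<tau> / 2 * f2' m) (f1 m / 2) (\<tau> / 4 * f1' m)
         \<le> (Q1 * n1 / 8 + Q2 * n2 / 8 + M1 * D2 * c12 / 4 + D1 * M2 * c12 / 4
             + M1 * M2\<^sup>2 * c221 / 4 + M1\<^sup>2 * M2 * c112 / 8) * \<tau>\<^sup>2"
proof -
  have tT: "t \<in> {0..T}" and mT: "m \<in> {0..T}" and sub: "{m..t} \<subseteq> {0..T}"
    and mt: "m \<le> t" "t - m = \<tau> / 2" "0 \<le> \<tau>"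
    using t by (auto simp: m_def \<tau>_def field_simps)
  note nonneg = bounds_nonneg[OF order_trans[OF t(1) order_trans[OF t(2,3)]]]
  have taylor1: "f1 m / 2 + \<tau> / 4 * f1' m + (f1 m / 2 + \<tau> / 4 * f1' m) - f1 t
      = - (f1 t - f1 m - (t - m) * f1' m)"
    by (simp add: m_def \<tau>_def field_simps)
  have X1: "\<bar>f1 m / 2 + \<tau> / 4 * f1' m + (f1 m / 2 + \<tau> / 4 * f1' m) - f1 t\<bar> \<le> Q1 * \<tau>\<^sup>2 / 8"
    using abs_remainder_left_le[OF d1 d1' Q1 sub mt(1)] unfolding taylor1 abs_minus_cancel mt(2)
    by (simp add: power2_eq_square)
  have taylor2: "f2 m + \<tau> / 2 * f2' m - f2 t = - (f2 t - f2 m - (t - m) * f2' m)"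
    by (simp add: m_def \<tau>_def field_simps)
  have X2: "\<bar>f2 m + \<tau> / 2 * f2' m - f2 t\<bar> \<le> Q2 * \<tau>\<^sup>2 / 8"
    using abs_remainder_left_le[OF d2 d2' Q2 sub mt(1)] unfolding taylor2 abs_minus_cancel mt(2)
    by (simp add: power2_eq_square)
  have commutator_coefficient: "f1 m / 2 * (\<tau> * f2 m) - f2 t * (\<tau> / 2 * f1 m) = \<tau> / 2 * (f1 m * (f2 m - f2 t))"
    by (simp add: algebra_simps)
  have "\<bar>f1 m / 2 * (\<tau> * f2 m) - f2 t * (\<tau> / 2 * f1 m)\<bar> = \<tau> / 2 * (\<bar>f1 m\<bar> * \<bar>f2 t - f2 m\<bar>)"
    unfolding commutator_coefficient using mt(3) by (simp add: abs_mult abs_minus_commute)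
  also have "\<dots> \<le> \<tau> / 2 * (M1 * (D2 * (\<tau> / 2)))"
    using M1[OF mT] abs_increment_le[OF d2 D2 sub mt(1)] mt nonneg by (intro mult_left_mono mult_mono) auto
  finally have X3: "\<bar>f1 m / 2 * (\<tau> * f2 m) - f2 t * (\<tau> / 2 * f1 m)\<bar> \<le> M1 * D2 / 4 * \<tau>\<^sup>2"
    by (simp add: power2_eq_square ac_simps)
  have "\<bar>\<tau> / 4 * f1' m * (\<tau> * f2 m)\<bar> = \<tau> * \<tau> / 4 * (\<bar>f1' m\<bar> * \<bar>f2 m\<bar>)"
    using mt(3) by (simp add: abs_mult)
  also have "\<dots> \<le> \<tau> * \<tau> / 4 * (D1 * M2)"
    using D1[OF mT] M2[OF mT] nonneg by (intro mult_left_mono mult_mono) auto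
  finally have X4: "\<bar>\<tau> / 4 * f1' m * (\<tau> * f2 m)\<bar> \<le> D1 * M2 / 4 * \<tau>\<^sup>2"
    by (simp add: power2_eq_square ac_simps)
  have Y: "\<bar>f1 m / 2\<bar> \<le> M1 / 2" and Y': "\<bar>f2 t\<bar> \<le> M2"
    and Z: "\<bar>\<tau> * f2 m\<bar> \<le> \<tau> * M2" and Z': "\<bar>\<tau> / 2 * f1 m\<bar> \<le> \<tau> / 2 * M1"
    using M1[OF mT] M2[OF mT] M2[OF tT] mt(3) by (simp_all add: abs_mult mult_left_mono)
  have "defect_bound K1 K2 (f1 t) (f2 t) (\<tau> / 2 * f1 m) (\<tau> * f2 m)
           (f1 m / 2 + \<tau> / 4 * f1' m) (f2 m + \<tau> / 2 * f2' m) (f1 m / 2) (\<tau> / 4 * f1' m)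
      \<le> Q1 * \<tau>\<^sup>2 / 8 * n1 + Q2 * \<tau>\<^sup>2 / 8 * n2 + M1 * D2 / 4 * \<tau>\<^sup>2 * c12 + D1 * M2 / 4 * \<tau>\<^sup>2 * c12
        + M1 / 2 * ((\<tau> * M2)\<^sup>2 / 2 * c221) + M2 * ((\<tau> / 2 * M1)\<^sup>2 / 2 * c112)"
    by (rule defect_bound_le[OF X1 X2 X3 X4 Y Z Y' Z'])
  then show ?thesis by (simp add: power2_eq_square field_simps)
qed

lemma approx_propagator_s2:
  assumes d1': "\<And>t. t \<in> {0..T} \<Longrightarrow> (f1' has_real_derivative f1'' t) (at t within {0..T})"
    and d2': "\<And>t. t \<in> {0..T} \<Longrightarrow> (f2' has_real_derivative f2'' t) (at t within {0..T})"
    and Q1: "\<And>t. t \<in> {0..T} \<Longrightarrow> \<bar>f1'' t\<bar> \<le> Q1" and Q2: "\<And>t. t \<in> {0..T} \<Longrightarrow> \<bar>f2'' t\<bar> \<le> Q2"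
    and t0: "0 \<le> t0" and h: "0 \<le> h" and t1: "t0 + h \<le> T"
  shows "approx_propagator (\<lambda>t. f1 t *\<^sub>R K1 + f2 t *\<^sub>R K2) t0 (t0 + h)
           ((Q1 * n1 / 8 + Q2 * n2 / 8 + M1 * D2 * c12 / 4 + D1 * M2 * c12 / 4
             + M1 * M2\<^sup>2 * c221 / 4 + M1\<^sup>2 * M2 * c112 / 8) / 3 * h ^ 3)
           (exp ((h / 2 * f1 (t0 + h / 2)) *\<^sub>R K1) * exp ((h * f2 (t0 + h / 2)) *\<^sub>R K2)
            * exp ((h / 2 * f1 (t0 + h / 2)) *\<^sub>R K1))"
proof -
  define t1 where "t1 = t0 + h"
  define C where "C = Q1 * n1 / 8 + Q2 * n2 / 8 + M1 * D2 * c12 / 4 + D1 * M2 * c12 / 4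
             + M1 * M2\<^sup>2 * c221 / 4 + M1\<^sup>2 * M2 * c112 / 8"
  define a where "a = (\<lambda>t. (t - t0) / 2 * f1 ((t + t0) / 2))"
  define b where "b = (\<lambda>t. (t - t0) * f2 ((t + t0) / 2))"
  define P where "P = (\<lambda>t. C * (t - t0) ^ 3 / 3)"
  have sub: "{t0..t1} \<subseteq> {0..T}" and msub: "(\<lambda>t. (t + t0) / 2) ` {t0..t1} \<subseteq> {0..T}"
    using t0 t1 h by (auto simp: t1_def)
  have da: "(a has_real_derivative f1 ((t + t0) / 2) / 2 + (t - t0) / 4 * f1' ((t + t0) / 2))
      (at t within {t0..t1})" if "t \<in> {t0..t1}" for t
    unfolding a_def using has_real_derivative_midpoint[OF d1 msub that]
    by (auto intro!: derivative_eq_intros simp: field_simps)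
  have db: "(b has_real_derivative f2 ((t + t0) / 2) + (t - t0) / 2 * f2' ((t + t0) / 2))
      (at t within {t0..t1})" if "t \<in> {t0..t1}" for t
    unfolding b_def using has_real_derivative_midpoint[OF d2 msub that]
    by (auto intro!: derivative_eq_intros simp: field_simps)
  have step: "approx_propagator (\<lambda>t. f1 t *\<^sub>R K1 + f2 t *\<^sub>R K2) t0 t1 (P t1 - P t0)
      (exp (a t1 *\<^sub>R K1) * exp (b t1 *\<^sub>R K2) * exp (a t1 *\<^sub>R K1))"
  proof (rule approx_propagator_exp_product[OF contr1 contr2, where a = a and c = a and b = b
        and cm = "\<lambda>t. f1 ((t + t0) / 2) / 2" and cr = "\<lambda>t. (t - t0) / 4 * f1' ((t + t0) / 2)"
        and p = "\<lambda>t. C * (t - t0)\<^sup>2" and P = P, OF _ _ _ da db da])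
    fix t assume "t \<in> {t0..t1}"
    then show "defect_bound K1 K2 (f1 t) (f2 t) (a t) (b t)
        (f1 ((t + t0) / 2) / 2 + (t - t0) / 4 * f1' ((t + t0) / 2))
        (f2 ((t + t0) / 2) + (t - t0) / 2 * f2' ((t + t0) / 2))
        (f1 ((t + t0) / 2) / 2) ((t - t0) / 4 * f1' ((t + t0) / 2)) \<le> C * (t - t0)\<^sup>2"
      unfolding a_def b_def C_def using defect_bound_s2_le[OF d1' d2' Q1 Q2 t0] sub by auto
    show "(P has_real_derivative C * (t - t0)\<^sup>2) (at t within {t0..t1})"
      unfolding P_def by (auto intro!: derivative_eq_intros simp: power2_eq_square)
  qed (simp_all add: a_def b_def)
  have increment: "P t1 - P t0 = C / 3 * h ^ 3"
    by (simp add: P_def t1_def)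
  have endpoint: "exp (a t1 *\<^sub>R K1) * exp (b t1 *\<^sub>R K2) * exp (a t1 *\<^sub>R K1)
      = exp ((h / 2 * f1 (t0 + h / 2)) *\<^sub>R K1) * exp ((h * f2 (t0 + h / 2)) *\<^sub>R K2)
        * exp ((h / 2 * f1 (t0 + h / 2)) *\<^sub>R K1)"
    by (simp add: a_def b_def t1_def field_simps)
  show ?thesis using step unfolding increment endpoint C_def unfolding t1_def .
qed

lemma defect_bound_g2_le:
  assumes dF1: "\<And>t. t \<in> {0..T} \<Longrightarrow> (F1 has_real_derivative f1 t) (at t within {0..T})"
    and dF2: "\<And>t. t \<in> {0..T} \<Longrightarrow> (F2 has_real_derivative f2 t) (at t within {0..T})"
    and t: "0 \<le> t0" "t0 \<le> t" "t \<le> T"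
  defines "m \<equiv> (t + t0) / 2" and "\<tau> \<equiv> t - t0"
  shows "defect_bound K1 K2 (f1 t) (f2 t) (F1 t - F1 m) (F2 t - F2 t0) (f1 t - f1 m / 2) (f2 t) (f1 m / 2) 0
         \<le> (M1 * D2 * c12 / 4 + D1 * M2 * c12 / 8 + M1 * M2\<^sup>2 * c221 / 4 + M1\<^sup>2 * M2 * c112 / 8) * \<tau>\<^sup>2"
proof -
  have tT: "t \<in> {0..T}" and mT: "m \<in> {0..T}" and msub: "{m..t} \<subseteq> {0..T}" and tsub: "{t0..t} \<subseteq> {0..T}"
    and mt: "m \<le> t" "t - m = \<tau> / 2" "0 \<le> \<tau>"
    using t by (auto simp: m_def \<tau>_def field_simps)
  note nonneg = bounds_nonneg[OF order_trans[OF t(1) order_trans[OF t(2,3)]]]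
  define Rb where "Rb = F2 t - F2 t0 - (t - t0) * f2 t"
  define Ra where "Ra = F1 t - F1 m - (t - m) * f1 m"
  have Rb: "\<bar>Rb\<bar> \<le> D2 * \<tau>\<^sup>2 / 2"
    using abs_remainder_right_le[OF dF2 d2 D2 tsub t(2)] by (simp add: Rb_def \<tau>_def)
  have Ra: "\<bar>Ra\<bar> \<le> D1 * \<tau>\<^sup>2 / 8"
    using abs_remainder_left_le[OF dF1 d1 D1 msub mt(1)] unfolding Ra_def mt(2)
    by (simp add: power2_eq_square)
  have "f1 m / 2 * (F2 t - F2 t0) - f2 t * (F1 t - F1 m) = f1 m / 2 * Rb - f2 t * Ra"
    by (simp add: Ra_def Rb_def m_def field_simps)
  then have "\<bar>f1 m / 2 * (F2 t - F2 t0) - f2 t * (F1 t - F1 m)\<bar> \<le> \<bar>f1 m\<bar> / 2 * \<bar>Rb\<bar> + \<bar>f2 t\<bar> * \<bar>Ra\<bar>"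
    using abs_triangle_ineq4[of "f1 m / 2 * Rb" "f2 t * Ra"] by (simp add: abs_mult)
  also have "\<dots> \<le> M1 / 2 * (D2 * \<tau>\<^sup>2 / 2) + M2 * (D1 * \<tau>\<^sup>2 / 8)"
    using M1[OF mT] M2[OF tT] Ra Rb nonneg by (intro add_mono mult_mono) auto
  finally have X3: "\<bar>f1 m / 2 * (F2 t - F2 t0) - f2 t * (F1 t - F1 m)\<bar>
      \<le> M1 / 2 * (D2 * \<tau>\<^sup>2 / 2) + M2 * (D1 * \<tau>\<^sup>2 / 8)" .
  have Y: "\<bar>f1 m / 2\<bar> \<le> M1 / 2" and Y': "\<bar>f2 t\<bar> \<le> M2"
    using M1[OF mT] M2[OF tT] by simp_all
  have Z: "\<bar>F2 t - F2 t0\<bar> \<le> M2 * \<tau>" and Z': "\<bar>F1 t - F1 m\<bar> \<le> M1 * (\<tau> / 2)"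
    using abs_increment_le[OF dF2 M2 tsub t(2)] abs_increment_le[OF dF1 M1 msub mt(1)] mt
    by (simp_all add: \<tau>_def)
  have "defect_bound K1 K2 (f1 t) (f2 t) (F1 t - F1 m) (F2 t - F2 t0) (f1 t - f1 m / 2) (f2 t) (f1 m / 2) 0
      \<le> 0 * n1 + 0 * n2 + (M1 / 2 * (D2 * \<tau>\<^sup>2 / 2) + M2 * (D1 * \<tau>\<^sup>2 / 8)) * c12 + 0 * c12
        + M1 / 2 * ((M2 * \<tau>)\<^sup>2 / 2 * c221) + M2 * ((M1 * (\<tau> / 2))\<^sup>2 / 2 * c112)"
    by (rule defect_bound_le[OF _ _ X3 _ Y Z Y' Z']) simp_all
  then show ?thesis by (simp add: power2_eq_square field_simps)
qed

lemma approx_propagator_g2: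
  assumes t0: "0 \<le> t0" and h: "0 \<le> h" and t1: "t0 + h \<le> T"
  shows "approx_propagator (\<lambda>t. f1 t *\<^sub>R K1 + f2 t *\<^sub>R K2) t0 (t0 + h)
           ((M1 * D2 * c12 / 4 + D1 * M2 * c12 / 8 + M1 * M2\<^sup>2 * c221 / 4 + M1\<^sup>2 * M2 * c112 / 8) / 3 * h ^ 3)
           (exp (integral {t0 + h / 2..t0 + h} f1 *\<^sub>R K1) * exp (integral {t0..t0 + h} f2 *\<^sub>R K2)
            * exp (integral {t0..t0 + h / 2} f1 *\<^sub>R K1))"
proof -
  define t1 where "t1 = t0 + h"
  define m where "m = (\<lambda>t. (t + t0) / 2)"
  define C where "C = M1 * D2 * c12 / 4 + D1 * M2 * c12 / 8 + M1 * M2\<^sup>2 * c221 / 4 + M1\<^sup>2 * M2 * c112 / 8"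
  define F1 where "F1 = (\<lambda>t. integral {0..t} f1)"
  define F2 where "F2 = (\<lambda>t. integral {0..t} f2)"
  define a where "a = (\<lambda>t. F1 t - F1 (m t))"
  define b where "b = (\<lambda>t. F2 t - F2 t0)"
  define c where "c = (\<lambda>t. F1 (m t) - F1 t0)"
  define P where "P = (\<lambda>t. C * (t - t0) ^ 3 / 3)"
  have sub: "{t0..t1} \<subseteq> {0..T}" and msub: "m ` {t0..t1} \<subseteq> {0..T}"
    using t0 t1 h by (auto simp: t1_def m_def)
  have dF1: "(F1 has_real_derivative f1 t) (at t within {0..T})" if "t \<in> {0..T}" for t
    unfolding F1_def by (rule integral_has_real_derivative_Icc[OF DERIV_continuous_on[OF d1] that])
  have dF2: "(F2 has_real_derivative f2 t) (at t within {0..T})" if "t \<in> {0..T}" for t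
    unfolding F2_def by (rule integral_has_real_derivative_Icc[OF DERIV_continuous_on[OF d2] that])
  have dFm: "((\<lambda>t. F1 (m t)) has_real_derivative f1 (m t) / 2) (at t within {t0..t1})" if "t \<in> {t0..t1}" for t
    unfolding m_def by (rule has_real_derivative_midpoint[OF dF1 msub[unfolded m_def] that])
  have step: "approx_propagator (\<lambda>t. f1 t *\<^sub>R K1 + f2 t *\<^sub>R K2) t0 t1 (P t1 - P t0)
      (exp (a t1 *\<^sub>R K1) * exp (b t1 *\<^sub>R K2) * exp (c t1 *\<^sub>R K1))"
  proof (rule approx_propagator_exp_product[OF contr1 contr2, where a = a and b = b and c = c
        and a' = "\<lambda>t. f1 t - f1 (m t) / 2" and b' = f2 and cm = "\<lambda>t. f1 (m t) / 2" and cr = "\<lambda>_. 0"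
        and p = "\<lambda>t. C * (t - t0)\<^sup>2" and P = P])
    fix t assume "t \<in> {t0..t1}"
    then show "defect_bound K1 K2 (f1 t) (f2 t) (a t) (b t) (f1 t - f1 (m t) / 2) (f2 t) (f1 (m t) / 2) 0
        \<le> C * (t - t0)\<^sup>2"
      unfolding a_def b_def m_def C_def using defect_bound_g2_le[OF dF1 dF2 t0] sub by auto
    show "(P has_real_derivative C * (t - t0)\<^sup>2) (at t within {t0..t1})"
      unfolding P_def by (auto intro!: derivative_eq_intros simp: power2_eq_square)
  next
    fix t assume t: "t \<in> {t0..t1}"
    have dF1s: "(F1 has_real_derivative f1 t) (at t within {t0..t1})"
      and dF2s: "(F2 has_real_derivative f2 t) (at t within {t0..t1})"
      using has_field_derivative_subset[OF dF1 sub] has_field_derivative_subset[OF dF2 sub] t sub by auto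
    show "(a has_real_derivative f1 t - f1 (m t) / 2) (at t within {t0..t1})"
      unfolding a_def by (intro DERIV_diff dF1s dFm t)
    show "(b has_real_derivative f2 t) (at t within {t0..t1})"
      unfolding b_def using DERIV_diff[OF dF2s DERIV_const] by simp
    show "(c has_real_derivative f1 (m t) / 2 + 0) (at t within {t0..t1})"
      unfolding c_def using DERIV_diff[OF dFm[OF t] DERIV_const] by simp
  qed (simp_all add: a_def b_def c_def m_def)
  have increment: "P t1 - P t0 = C / 3 * h ^ 3"
    by (simp add: P_def t1_def)
  have "m t1 \<in> {t0..t1}" using h by (simp add: m_def t1_def)
  then have "integral {m t1..t1} f1 = a t1" "integral {t0..t1} f2 = b t1" "integral {t0..m t1} f1 = c t1"
    unfolding a_def b_def c_def F1_def F2_def using sub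
    by (auto intro!: integral_Icc_eq_diff[OF DERIV_continuous_on[OF d1]]
        integral_Icc_eq_diff[OF DERIV_continuous_on[OF d2]])
  moreover have "m t1 = t0 + h / 2" by (simp add: m_def t1_def field_simps)
  ultimately show ?thesis using step unfolding increment C_def unfolding t1_def by simp
qed

end

section \<open>Linear operators on \<open>\<complex>\<^sup>n\<close>\<close>

text \<open>The Banach algebra of linear maps of \<open>\<complex>\<^sup>n\<close> under the operator norm, in which the
  library's \<open>exp\<close> is available; matrices enter through \<open>endo_of\<close>.\<close>

typedef (overloaded) ('n::finite) endo = "UNIV :: ((complex^'n) \<Rightarrow>\<^sub>L (complex^'n)) set"
  by simp

setup_lifting type_definition_endo

instantiation endo :: (finite) real_normed_vector
begin
lift_definition norm_endo :: "'a endo \<Rightarrow> real" is "norm :: ((complex^'a) \<Rightarrow>\<^sub>L (complex^'a)) \<Rightarrow> real" .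
lift_definition minus_endo :: "'a endo \<Rightarrow> 'a endo \<Rightarrow> 'a endo" is "(-)" .
lift_definition plus_endo :: "'a endo \<Rightarrow> 'a endo \<Rightarrow> 'a endo" is "(+)" .
lift_definition uminus_endo :: "'a endo \<Rightarrow> 'a endo" is uminus .
lift_definition zero_endo :: "'a endo" is 0 .
lift_definition scaleR_endo :: "real \<Rightarrow> 'a endo \<Rightarrow> 'a endo" is scaleR .
definition dist_endo :: "'a endo \<Rightarrow> 'a endo \<Rightarrow> real" where "dist_endo a b = norm (a - b)"
definition sgn_endo :: "'a endo \<Rightarrow> 'a endo" where "sgn_endo x = scaleR (inverse (norm x)) x"
definition uniformity_endo :: "('a endo \<times> 'a endo) filter" where
  "uniformity_endo = (INF e\<in>{0 <..}. principal {(x, y). dist x y < e})"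
definition open_endo :: "'a endo set \<Rightarrow> bool" where
  "open_endo S = (\<forall>x\<in>S. \<forall>\<^sub>F (x', y) in uniformity. x' = x \<longrightarrow> y \<in> S)"
instance
  apply standard
  unfolding dist_endo_def open_endo_def sgn_endo_def uniformity_endo_def
  apply (rule refl | (transfer, force simp: norm_triangle_ineq algebra_simps))+
  done
end

instantiation endo :: (finite) real_normed_algebra_1
begin
lift_definition one_endo :: "'a endo" is id_blinfun .
lift_definition times_endo :: "'a endo \<Rightarrow> 'a endo \<Rightarrow> 'a endo" is "(o\<^sub>L)" .
instance
  apply intro_classes
  apply (transfer; auto intro!: blinfun_eqI simp: blinfun.add_left blinfun.add_right
      blinfun.scaleR_left blinfun.scaleR_right norm_blinfun_compose)+
    apply (metis norm_blinfun_id norm_zero zero_neq_one)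
   apply (transfer, rule norm_blinfun_compose)
  apply (transfer, rule norm_blinfun_id)
  done
end

instance endo :: (finite) banach
proof
  fix X :: "nat \<Rightarrow> 'a endo" assume "Cauchy X"
  then have "Cauchy (\<lambda>n. Rep_endo (X n))"
    by (simp add: Cauchy_def dist_norm dist_endo_def norm_endo.rep_eq minus_endo.rep_eq)
  then obtain L where L: "(\<lambda>n. Rep_endo (X n)) \<longlonglongrightarrow> L"
    using Cauchy_convergent_iff convergent_def by blast
  have "X \<longlonglongrightarrow> Abs_endo L"
    using L unfolding LIMSEQ_iff by (simp add: norm_endo.rep_eq minus_endo.rep_eq Abs_endo_inverse)
  then show "convergent X" by (auto simp: convergent_def)
qed

definition app :: "'n::finite endo \<Rightarrow> complex^'n \<Rightarrow> complex^'n" where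
  "app A x = blinfun_apply (Rep_endo A) x"

lemma app_mult [simp]: "app (A * B) x = app A (app B x)"
  by (simp add: app_def times_endo.rep_eq)

lemma app_one [simp]: "app 1 x = x"
  by (simp add: app_def one_endo.rep_eq)

lemma app_add [simp]: "app (A + B) x = app A x + app B x"
  by (simp add: app_def plus_endo.rep_eq blinfun.add_left)

lemma app_diff [simp]: "app (A - B) x = app A x - app B x"
  by (simp add: app_def minus_endo.rep_eq blinfun.diff_left)

lemma app_uminus [simp]: "app (- A) x = - app A x"
  by (simp add: app_def uminus_endo.rep_eq blinfun.minus_left)

lemma app_scaleR [simp]: "app (r *\<^sub>R A) x = r *\<^sub>R app A x"
  by (simp add: app_def scaleR_endo.rep_eq blinfun.scaleR_left)

lemma app_diff_right [simp]: "app A (x - y) = app A x - app A y"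
  by (simp add: app_def blinfun.diff_right)

lemma norm_app_le: "norm (app A x) \<le> norm A * norm x"
  by (simp add: app_def norm_endo.rep_eq norm_blinfun)

lemma norm_endo_le:
  fixes A :: "'n::finite endo"
  assumes "\<And>x. norm (app A x) \<le> b * norm x"
  shows "norm A \<le> b"
proof -
  obtain x :: "complex^'n" where "norm x = 1"
    using vector_choose_size[of 1] by (metis zero_le_one)
  then have "norm (app A x) \<le> b"
    using assms[of x] by simp
  then have "0 \<le> b"
    using norm_ge_zero order_trans by blast
  with assms show ?thesis by (simp add: app_def norm_endo.rep_eq norm_blinfun_bound)
qed

lemma endo_eqI: "(\<And>x. app A x = app B x) \<Longrightarrow> A = B"
  by (metis Rep_endo_inject app_def blinfun_eqI)

lemma has_vector_derivative_app:
  fixes F :: "real \<Rightarrow> 'n::finite endo"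
  assumes "(F has_vector_derivative F') (at t within S)"
  shows "((\<lambda>t. app (F t) x) has_vector_derivative app F' x) (at t within S)"
proof -
  have "bounded_linear (Rep_endo :: 'n::finite endo \<Rightarrow> _)"
    by (rule bounded_linear_intro[where K = 1])
      (simp_all add: plus_endo.rep_eq scaleR_endo.rep_eq norm_endo.rep_eq)
  moreover have "bounded_linear (\<lambda>A. blinfun_apply A x)" by simp
  ultimately have "bounded_linear (\<lambda>A :: 'n endo. app A x)"
    unfolding app_def using bounded_linear_compose by blast
  from bounded_linear.has_vector_derivative[OF this assms] show ?thesis .
qed

lemma has_real_derivative_norm_power2:
  assumes "(y has_vector_derivative y') (at t within S)"
  shows "((\<lambda>t. (norm (y t))\<^sup>2) has_real_derivative 2 * inner (y t) y') (at t within S)"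
proof -
  have "((\<lambda>t. inner (y t) (y t)) has_derivative
          (\<lambda>h. inner (y t) (h *\<^sub>R y') + inner (h *\<^sub>R y') (y t))) (at t within S)"
    using assms unfolding has_vector_derivative_def by (intro has_derivative_inner)
  moreover have "(\<lambda>h. inner (y t) (h *\<^sub>R y') + inner (h *\<^sub>R y') (y t)) = (*) (2 * inner (y t) y')"
    by (auto simp: fun_eq_iff inner_commute algebra_simps)
  ultimately show ?thesis
    unfolding has_field_derivative_def power2_norm_eq_inner by simp
qed

lemma norm_increment_le_of_inner_bound:
  fixes e :: "real \<Rightarrow> 'a::real_inner"
  assumes "t0 \<le> t1"
    and de: "\<And>t. t \<in> {t0..t1} \<Longrightarrow> (e has_vector_derivative e' t) (at t within {t0..t1})"
    and inner: "\<And>t. t \<in> {t0..t1} \<Longrightarrow> \<bar>inner (e t) (e' t)\<bar> \<le> norm (e t) * p t"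
    and p: "\<And>t. t \<in> {t0..t1} \<Longrightarrow> 0 \<le> p t"
    and dP: "\<And>t. t \<in> {t0..t1} \<Longrightarrow> (P has_real_derivative p t) (at t within {t0..t1})"
  shows "norm (e t1) \<le> norm (e t0) + (P t1 - P t0)"
proof (rule field_le_epsilon)
  fix \<epsilon> :: real assume "0 < \<epsilon>"
  \<comment> \<open>\<open>sqrt (norm e\<^sup>2 + \<epsilon>\<^sup>2)\<close> is differentiable even where \<open>e\<close> vanishes\<close>
  define u where "u = (\<lambda>t. (norm (e t))\<^sup>2 + \<epsilon>\<^sup>2)"
  have u_pos: "0 < u t" for t
    using \<open>0 < \<epsilon>\<close> by (simp add: u_def add_nonneg_pos)
  have norm_le: "norm (e t) \<le> sqrt (u t)" for t
    unfolding u_def by (intro real_le_rsqrt) simp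
  have "norm (sqrt (u t1) - sqrt (u t0)) \<le> P t1 - P t0"
  proof (rule differentiable_bound_Icc[OF \<open>t0 \<le> t1\<close>])
    fix t assume t: "t \<in> {t0..t1}"
    have "(u has_real_derivative 2 * inner (e t) (e' t)) (at t within {t0..t1})"
      unfolding u_def using DERIV_add[OF has_real_derivative_norm_power2[OF de[OF t]] DERIV_const] by simp
    from DERIV_chain2[OF DERIV_real_sqrt[OF u_pos] this]
    show "((\<lambda>t. sqrt (u t)) has_vector_derivative inverse (sqrt (u t)) / 2 * (2 * inner (e t) (e' t)))
        (at t within {t0..t1})"
      by (simp add: has_real_derivative_iff_has_vector_derivative)
    have "\<bar>inner (e t) (e' t)\<bar> \<le> sqrt (u t) * p t"
      using inner[OF t] mult_right_mono[OF norm_le[of t] p[OF t]] by linarith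
    then show "norm (inverse (sqrt (u t)) / 2 * (2 * inner (e t) (e' t))) \<le> p t"
      using u_pos[of t] by (simp add: abs_mult divide_simps mult.commute)
  qed (rule dP)
  moreover have "sqrt (u t0) \<le> norm (e t0) + \<epsilon>"
    unfolding u_def using sqrt_add_le_add_sqrt[of "(norm (e t0))\<^sup>2" "\<epsilon>\<^sup>2"] \<open>0 < \<epsilon>\<close> by simp
  ultimately show "norm (e t1) \<le> norm (e t0) + (P t1 - P t0) + \<epsilon>"
    using norm_le[of t1] by simp
qed

definition skew :: "'n::finite endo \<Rightarrow> bool" where
  "skew K \<longleftrightarrow> (\<forall>x. inner x (app K x) = 0)"

lemma norm_increment_le_skew:
  fixes G :: "real \<Rightarrow> 'n::finite endo"
  assumes "t0 \<le> t1"
    and de: "\<And>t. t \<in> {t0..t1} \<Longrightarrow> (e has_vector_derivative app (G t) (e t) + r t) (at t within {t0..t1})"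
    and skew: "\<And>t. t \<in> {t0..t1} \<Longrightarrow> skew (G t)"
    and r: "\<And>t. t \<in> {t0..t1} \<Longrightarrow> norm (r t) \<le> p t"
    and dP: "\<And>t. t \<in> {t0..t1} \<Longrightarrow> (P has_real_derivative p t) (at t within {t0..t1})"
  shows "norm (e t1) \<le> norm (e t0) + (P t1 - P t0)"
proof (rule norm_increment_le_of_inner_bound[OF \<open>t0 \<le> t1\<close> de _ _ dP])
  fix t assume t: "t \<in> {t0..t1}"
  have "\<bar>inner (e t) (app (G t) (e t) + r t)\<bar> = \<bar>inner (e t) (r t)\<bar>"
    using skew[OF t] by (simp add: inner_add_right skew_def)
  also have "\<dots> \<le> norm (e t) * norm (r t)" by (rule Cauchy_Schwarz_ineq2)
  also have "\<dots> \<le> norm (e t) * p t" by (rule mult_left_mono[OF r[OF t] norm_ge_zero])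
  finally show "\<bar>inner (e t) (app (G t) (e t) + r t)\<bar> \<le> norm (e t) * p t" .
  show "0 \<le> p t" using r[OF t] norm_ge_zero order_trans by blast
qed

lemma norm_exp_skew_le:
  assumes "skew K"
  shows "norm (exp (s *\<^sub>R K)) \<le> 1"
proof -
  have contraction: "norm (app (exp (s *\<^sub>R K)) x) \<le> norm x" if "skew K" "0 \<le> s" for K s x
  proof -
    have "((\<lambda>t. app (exp (t *\<^sub>R K)) x) has_vector_derivative app K (app (exp (t *\<^sub>R K)) x) + 0)
        (at t within {0..s})" for t
      using has_vector_derivative_app[OF has_vector_derivative_at_within[OF exp_scaleR_has_vector_derivative_left]]
      by simp
    from norm_increment_le_skew[OF \<open>0 \<le> s\<close> this \<open>skew K\<close>, of "\<lambda>_. 0" "\<lambda>_. 0"]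
    show ?thesis by simp
  qed
  have "skew (- K)" using assms by (simp add: skew_def)
  then have "norm (app (exp (s *\<^sub>R K)) x) \<le> norm x" for x
    using contraction[OF assms, of s x] contraction[of "- K" "- s" x] by (cases "0 \<le> s") simp_all
  then show ?thesis by (intro norm_endo_le) simp
qed

lemma approx_propagator_error:
  fixes U G :: "real \<Rightarrow> 'n::finite endo"
  assumes "t0 \<le> t1"
    and dU: "\<And>t. t \<in> {t0..t1} \<Longrightarrow> (U has_vector_derivative G t * U t) (at t within {t0..t1})"
    and skew: "\<And>t. t \<in> {t0..t1} \<Longrightarrow> skew (G t)"
    and S: "approx_propagator G t0 t1 \<delta> S" and W: "norm W \<le> 1"
  shows "norm (S * W - U t1) \<le> norm (W - U t0) + \<delta>"
proof -
  obtain V V' p P where V0: "V t0 = 1" and V1: "V t1 = S" and P: "P t1 - P t0 \<le> \<delta>"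
    and dV: "\<And>t. t \<in> {t0..t1} \<Longrightarrow> (V has_vector_derivative V' t) (at t within {t0..t1})"
    and defect: "\<And>t. t \<in> {t0..t1} \<Longrightarrow> norm (V' t - G t * V t) \<le> p t"
    and dP: "\<And>t. t \<in> {t0..t1} \<Longrightarrow> (P has_real_derivative p t) (at t within {t0..t1})"
    using S unfolding approx_propagator_def by blast
  have "norm (app (S * W - U t1) x) \<le> (norm (W - U t0) + \<delta>) * norm x" for x
  proof -
    define e where "e = (\<lambda>t. app (V t * W - U t) x)"
    define r where "r = (\<lambda>t. app (V' t - G t * V t) (app W x))"
    have "norm (e t1) \<le> norm (e t0) + (P t1 * norm x - P t0 * norm x)"
    proof (rule norm_increment_le_skew[OF \<open>t0 \<le> t1\<close> _ skew])
      fix t assume t: "t \<in> {t0..t1}"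
      have "((\<lambda>t. V t * W - U t) has_vector_derivative V' t * W - G t * U t) (at t within {t0..t1})"
        by (intro has_vector_derivative_diff has_vector_derivative_mult_left dV dU t)
      moreover have "app (V' t * W - G t * U t) x = app (G t) (e t) + r t"
        by (simp add: e_def r_def algebra_simps)
      ultimately show "(e has_vector_derivative app (G t) (e t) + r t) (at t within {t0..t1})"
        unfolding e_def by (metis has_vector_derivative_app)
      have "norm (r t) \<le> norm (V' t - G t * V t) * norm (app W x)"
        unfolding r_def by (rule norm_app_le)
      also have "\<dots> \<le> p t * (1 * norm x)"
        using defect[OF t] order_trans[OF norm_app_le mult_right_mono[OF W norm_ge_zero]]
          order_trans[OF norm_ge_zero defect[OF t]]
        by (intro mult_mono) auto
      finally show "norm (r t) \<le> p t * norm x" by simp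
      show "((\<lambda>t. P t * norm x) has_real_derivative p t * norm x) (at t within {t0..t1})"
        using dP[OF t] by (rule DERIV_cmult_right)
    qed
    also have "\<dots> \<le> norm (app (W - U t0) x) + \<delta> * norm x"
      using P by (simp add: e_def V0 left_diff_distrib[symmetric] mult_right_mono)
    also have "\<dots> \<le> (norm (W - U t0) + \<delta>) * norm x"
      using norm_app_le[of "W - U t0" x] by (simp add: distrib_right)
    finally show ?thesis by (simp add: e_def V1)
  qed
  then show ?thesis by (rule norm_endo_le)
qed

fun trotter_product :: "(real \<Rightarrow> 'a::monoid_mult) \<Rightarrow> real \<Rightarrow> nat \<Rightarrow> 'a" where
  "trotter_product S h 0 = 1"
| "trotter_product S h (Suc k) = S (real k * h) * trotter_product S h k"

lemma trotter_product_error: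
  fixes U G S :: "real \<Rightarrow> 'n::finite endo"
  assumes h: "0 \<le> h"
    and dU: "\<And>t. t \<in> {0..real L * h} \<Longrightarrow> (U has_vector_derivative G t * U t) (at t within {0..real L * h})"
    and skew: "\<And>t. t \<in> {0..real L * h} \<Longrightarrow> skew (G t)" and U0: "U 0 = 1"
    and steps: "\<And>k. k < L \<Longrightarrow> approx_propagator G (real k * h) (real k * h + h) \<delta> (S (real k * h))"
    and contr: "\<And>k. k < L \<Longrightarrow> norm (S (real k * h)) \<le> 1"
  shows "norm (trotter_product S h L - U (real L * h)) \<le> real L * \<delta>"
proof -
  have "norm (trotter_product S h k) \<le> 1 \<and> norm (trotter_product S h k - U (real k * h)) \<le> real k * \<delta>"
    if "k \<le> L" for k
    using that
  proof (induction k)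
    case 0
    then show ?case by (simp add: U0)
  next
    case (Suc k)
    then have k: "k < L" and IH: "norm (trotter_product S h k) \<le> 1"
      "norm (trotter_product S h k - U (real k * h)) \<le> real k * \<delta>" by auto
    have sub: "{real k * h..real k * h + h} \<subseteq> {0..real L * h}"
      using k h mult_right_mono[of "real k + 1" "real L" h] by (auto simp: algebra_simps)
    have "norm (S (real k * h) * trotter_product S h k - U (real k * h + h))
        \<le> norm (trotter_product S h k - U (real k * h)) + \<delta>"
    proof (rule approx_propagator_error[OF _ _ _ steps[OF k] IH(1)])
      fix t assume "t \<in> {real k * h..real k * h + h}"
      with sub have t: "t \<in> {0..real L * h}" by blast
      show "(U has_vector_derivative G t * U t) (at t within {real k * h..real k * h + h})"
        by (rule has_vector_derivative_within_subset[OF dU[OF t] sub])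
      show "skew (G t)" by (rule skew[OF t])
    qed (use h in simp)
    moreover have "norm (S (real k * h) * trotter_product S h k) \<le> 1"
      using norm_mult_ineq[of "S (real k * h)"] contr[OF k] IH(1) by (meson mult_le_one norm_ge_zero order_trans)
    ultimately show ?case using IH(2) by (simp add: algebra_simps)
  qed
  then show ?thesis by simp
qed

section \<open>Matrices as operators\<close>

definition endo_of :: "complex^'n^'n \<Rightarrow> 'n::finite endo" where
  "endo_of M = Abs_endo (Blinfun (\<lambda>x. M *v x))"

lemma app_endo_of [simp]: "app (endo_of M) x = M *v x"
  by (simp add: app_def endo_of_def Abs_endo_inverse bounded_linear_Blinfun_apply)

lemma opn_eq_norm_endo_of: "opn M = norm (endo_of M)"
  by (simp add: opn_def endo_of_def norm_endo.rep_eq Abs_endo_inverse norm_blinfun.rep_eq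
      bounded_linear_Blinfun_apply)

lemma endo_of_mult: "endo_of (A ** B) = endo_of A * endo_of B"
  by (rule endo_eqI) (simp add: matrix_vector_mul_assoc)

lemma endo_of_one: "endo_of (mat 1) = 1"
  by (rule endo_eqI) simp

lemma endo_of_add: "endo_of (A + B) = endo_of A + endo_of B"
  by (rule endo_eqI) (simp add: matrix_vector_mult_add_rdistrib)

lemma endo_of_diff: "endo_of (A - B) = endo_of A - endo_of B"
  by (rule endo_eqI) (simp add: matrix_vector_mult_diff_rdistrib)

lemma endo_of_scaleR: "endo_of (r *\<^sub>R A) = r *\<^sub>R endo_of A"
  by (rule endo_eqI)
    (simp add: vec_eq_iff matrix_vector_mult_def scaleR_conv_of_real[where 'a = complex]
      sum_distrib_left algebra_simps)

lemma bounded_linear_endo_of: "bounded_linear (endo_of :: complex^'n^'n \<Rightarrow> 'n::finite endo)"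
  using linear_conv_bounded_linear linearI endo_of_add endo_of_scaleR by metis

definition matrix_of_endo :: "'n::finite endo \<Rightarrow> complex^'n^'n" where
  "matrix_of_endo X = (\<chi> i j. app X (axis j 1) $ i)"

lemma matrix_of_endo_of: "matrix_of_endo (endo_of M) = M"
  by (simp add: matrix_of_endo_def vec_eq_iff matrix_vector_mult_def axis_def if_distrib if_distribR cong: if_cong)

lemma bounded_linear_matrix_of_endo: "bounded_linear (matrix_of_endo :: 'n::finite endo \<Rightarrow> _)"
proof (rule bounded_linear_intro[where K = "real CARD('n) * real CARD('n)"])
  fix X Y :: "'n endo" and r :: real
  show "matrix_of_endo (X + Y) = matrix_of_endo X + matrix_of_endo Y"
    "matrix_of_endo (r *\<^sub>R X) = r *\<^sub>R matrix_of_endo X"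
    by (simp_all add: matrix_of_endo_def vec_eq_iff)
  have entry: "norm (matrix_of_endo X $ i $ j) \<le> norm X" for i j
  proof -
    have "norm (matrix_of_endo X $ i $ j) \<le> norm (app X (axis j 1))"
      using Finite_Cartesian_Product.norm_nth_le[of "app X (axis j 1)" i] by (simp add: matrix_of_endo_def)
    also have "\<dots> \<le> norm X * norm (axis j (1::complex))" by (rule norm_app_le)
    finally show ?thesis
      by (simp add: norm_vec_def L2_set_def axis_def if_distrib if_distribR cong: if_cong)
  qed
  have "norm (matrix_of_endo X) \<le> (\<Sum>i\<in>UNIV. norm (matrix_of_endo X $ i))"
    by (simp add: norm_vec_def L2_set_le_sum)
  also have "\<dots> \<le> (\<Sum>i\<in>UNIV. \<Sum>j\<in>UNIV. norm (matrix_of_endo X $ i $ j))"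
    by (intro sum_mono) (simp add: norm_vec_def L2_set_le_sum)
  also have "\<dots> \<le> (\<Sum>i\<in>(UNIV::'n set). \<Sum>j\<in>(UNIV::'n set). norm X)"
    by (intro sum_mono entry)
  finally show "norm (matrix_of_endo X) \<le> norm X * (real CARD('n) * real CARD('n))"
    by (simp add: ac_simps)
qed

lemma endo_of_mexp: "endo_of (mexp A) = exp (endo_of A)"
proof -
  have mpow: "endo_of (mpow A k) = endo_of A ^ k" for k
    by (induction k) (simp_all add: endo_of_one endo_of_mult)
  have series_term: "(1 / fact k) *\<^sub>R mpow A k = matrix_of_endo (endo_of A ^ k /\<^sub>R fact k)" for k
    by (metis mpow endo_of_scaleR matrix_of_endo_of divide_inverse_commute inverse_eq_divide mult_1)
  have "summable (\<lambda>k. endo_of A ^ k /\<^sub>R fact k)"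
    using summable_exp_generic[of "endo_of A"] by (simp add: divide_inverse_commute)
  then have "summable (\<lambda>k. (1 / fact k) *\<^sub>R mpow A k)"
    unfolding series_term by (rule bounded_linear.summable[OF bounded_linear_matrix_of_endo])
  then have "endo_of (mexp A) = (\<Sum>k. endo_of ((1 / fact k) *\<^sub>R mpow A k))"
    unfolding mexp_def by (rule bounded_linear.suminf[OF bounded_linear_endo_of])
  also have "\<dots> = exp (endo_of A)"
    by (simp add: endo_of_scaleR mpow exp_def divide_inverse_commute)
  finally show ?thesis .
qed

lemma endo_of_stepprod: "endo_of (stepprod S h k) = trotter_product (\<lambda>t. endo_of (S t)) h k"
  by (induction k) (simp_all add: endo_of_one endo_of_mult)

lemma app_endo_of_cmat: "app (endo_of (cmat c M)) x = (\<chi> i. c * (M *v x) $ i)"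
  by (simp add: cmat_def vec_eq_iff matrix_vector_mult_def sum_distrib_left algebra_simps)

lemma cmat_add: "cmat c (A + B) = cmat c A + cmat c B"
  by (simp add: cmat_def vec_eq_iff distrib_left)

lemma cmat_scaleR: "cmat c (r *\<^sub>R M) = r *\<^sub>R cmat c M"
  by (simp add: cmat_def vec_eq_iff scaleR_conv_of_real[where 'a = complex])

lemma cmat_mult_of_real: "cmat (c * complex_of_real r) M = r *\<^sub>R cmat c M"
  by (simp add: cmat_def vec_eq_iff scaleR_conv_of_real[where 'a = complex])

lemma commutator_endo_of_cmat:
  "commutator (endo_of (cmat a A)) (endo_of (cmat b B)) = endo_of (cmat (a * b) (comm A B))"
proof -
  have mult: "cmat a A ** cmat b B = cmat (a * b) (A ** B)" for a b and A B :: "complex^'n^'n"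
    by (simp add: cmat_def vec_eq_iff matrix_matrix_mult_def sum_distrib_left algebra_simps)
  have diff: "cmat c (A - B) = cmat c A - cmat c B" for c and A B :: "complex^'n^'n"
    by (simp add: cmat_def vec_eq_iff right_diff_distrib)
  show ?thesis
    by (simp add: commutator_def comm_def endo_of_mult[symmetric] endo_of_diff[symmetric] mult diff
        mult.commute[of b a])
qed

lemma norm_endo_of_cmat_le: "norm (endo_of (cmat c M)) \<le> cmod c * opn M"
proof (rule norm_endo_le)
  fix x
  have "norm (\<chi> i. c * (M *v x) $ i) = sqrt ((cmod c)\<^sup>2 * (\<Sum>i\<in>UNIV. (cmod ((M *v x) $ i))\<^sup>2))"
    by (simp add: norm_vec_def L2_set_def norm_mult power_mult_distrib sum_distrib_left)
  also have "\<dots> = cmod c * norm (M *v x)"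
    by (simp add: real_sqrt_mult norm_vec_def L2_set_def)
  also have "\<dots> \<le> cmod c * (opn M * norm x)"
    using norm_app_le[of "endo_of M" x] by (intro mult_left_mono) (simp_all add: opn_eq_norm_endo_of)
  finally show "norm (app (endo_of (cmat c M)) x) \<le> cmod c * opn M * norm x"
    unfolding app_endo_of_cmat mult.assoc .
qed

lemma skew_endo_of_hermitian:
  fixes H :: "complex^'n::finite^'n"
  assumes H: "hermitian H"
  shows "skew (endo_of (cmat (- \<i>) H))"
  unfolding skew_def
proof
  fix x :: "complex^'n"
  define q where "q = (\<Sum>i\<in>UNIV. \<Sum>j\<in>UNIV. cnj (x $ i) * (H $ i $ j * x $ j))"
  have inner_complex: "inner a b = Re (cnj a * b)" for a b :: complex
    by (simp add: inner_complex_def)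
  have "inner x (app (endo_of (cmat (- \<i>) H)) x) = Re (\<Sum>i\<in>UNIV. - \<i> * (cnj (x $ i) * (H *v x) $ i))"
    unfolding app_endo_of_cmat inner_vec_def vec_lambda_beta inner_complex Re_sum
    by (simp only: mult.left_commute)
  also have "\<dots> = Im q"
    by (simp add: q_def matrix_vector_mult_def sum_distrib_left flip: sum_negf)
  also have "Im q = 0"
  proof -
    have "cnj (H $ i $ j) = H $ j $ i" for i j
      using H unfolding hermitian_def by (metis complex_cnj_cnj)
    then have "cnj q = (\<Sum>i\<in>UNIV. \<Sum>j\<in>UNIV. x $ i * (H $ j $ i * cnj (x $ j)))"
      by (simp add: q_def)
    also have "\<dots> = q"
      unfolding q_def by (subst sum.swap) (simp add: algebra_simps)
    finally show ?thesis by (simp add: complex_eq_iff)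
  qed
  finally show "inner x (app (endo_of (cmat (- \<i>) H)) x) = 0" .
qed

lemma endo_of_comm: "endo_of (comm A B) = commutator (endo_of A) (endo_of B)"
  by (simp add: comm_def commutator_def endo_of_diff endo_of_mult)

lemma opn_comm_swap: "opn (comm A B) = opn (comm B A)"
  by (simp add: opn_eq_norm_endo_of endo_of_comm commutator_def norm_minus_commute)

lemma opn_comm_comm_swap: "opn (comm A (comm B C)) = opn (comm A (comm C B))"
proof -
  have "commutator (endo_of A) (commutator (endo_of C) (endo_of B))
      = - commutator (endo_of A) (commutator (endo_of B) (endo_of C))"
    by (simp add: commutator_def algebra_simps)
  then show ?thesis by (simp add: opn_eq_norm_endo_of endo_of_comm)
qed

section \<open>The four Trotter schemes\<close>

lemma abs_le_supn:
  assumes "continuous_on {0..T} f" and "t \<in> {0..T}"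
  shows "\<bar>f t\<bar> \<le> supn T f"
proof -
  have "compact ((\<lambda>t. \<bar>f t\<bar>) ` {0..T})"
    by (intro compact_continuous_image continuous_intros assms(1)) simp
  then have "bdd_above ((\<lambda>t. \<bar>f t\<bar>) ` {0..T})"
    by (simp add: bounded_imp_bdd_above compact_imp_bounded)
  then show ?thesis unfolding supn_def using assms(2) by (rule cSUP_upper2) simp
qed

locale trotter_problem =
  fixes H1 H2 :: "complex^'n::finite^'n"
    and f1 f1' f1'' f2 f2' f2'' :: "real \<Rightarrow> real"
    and T :: real and L :: nat
    and U :: "real \<Rightarrow> complex^'n^'n"
  assumes herm1: "hermitian H1" and herm2: "hermitian H2"
    and T_pos: "T > 0" and L_ge: "L \<ge> 1"
    and d1: "\<And>t. t \<in> {0..T} \<Longrightarrow> (f1 has_real_derivative f1' t) (at t within {0..T})"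
    and d1': "\<And>t. t \<in> {0..T} \<Longrightarrow> (f1' has_real_derivative f1'' t) (at t within {0..T})"
    and c1'': "continuous_on {0..T} f1''"
    and d2: "\<And>t. t \<in> {0..T} \<Longrightarrow> (f2 has_real_derivative f2' t) (at t within {0..T})"
    and d2': "\<And>t. t \<in> {0..T} \<Longrightarrow> (f2' has_real_derivative f2'' t) (at t within {0..T})"
    and c2'': "continuous_on {0..T} f2''"
    and U0: "U 0 = mat 1"
    and U_ode: "\<And>t. t \<in> {0..T} \<Longrightarrow>
        (U has_vector_derivative (cmat (- \<i>) (f1 t *\<^sub>R H1 + f2 t *\<^sub>R H2) ** U t)) (at t within {0..T})"
begin

definition K1 where "K1 = endo_of (cmat (- \<i>) H1)"
definition K2 where "K2 = endo_of (cmat (- \<i>) H2)"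

lemma skew_K: "skew K1" "skew K2"
  unfolding K1_def K2_def by (intro skew_endo_of_hermitian herm1 herm2)+

lemma norm_commutators_le:
  "norm (commutator K2 K1) \<le> opn (comm H1 H2)"
  "norm (commutator K1 (commutator K1 K2)) \<le> opn (comm H1 (comm H1 H2))"
  "norm (commutator K2 (commutator K2 K1)) \<le> opn (comm H2 (comm H2 H1))"
  using norm_endo_of_cmat_le[of "- \<i> * - \<i>" "comm H2 H1"]
    norm_endo_of_cmat_le[of "- \<i> * (- \<i> * - \<i>)" "comm H1 (comm H1 H2)"]
    norm_endo_of_cmat_le[of "- \<i> * (- \<i> * - \<i>)" "comm H2 (comm H2 H1)"]
  by (simp_all add: K1_def K2_def commutator_endo_of_cmat opn_comm_swap[of H1])

sublocale trotter_bounds K1 K2 f1 f1' f2 f2' T "supn T f1" "supn T f1'" "supn T f2" "supn T f2'"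
  "opn H1" "opn H2" "opn (comm H1 H2)" "opn (comm H1 (comm H1 H2))" "opn (comm H2 (comm H2 H1))"
proof
  show "norm (exp (s *\<^sub>R K1)) \<le> 1" "norm (exp (s *\<^sub>R K2)) \<le> 1" for s
    using norm_exp_skew_le skew_K by blast+
  show "norm K1 \<le> opn H1" "norm K2 \<le> opn H2"
    using norm_endo_of_cmat_le[of "- \<i>"] by (simp_all add: K1_def K2_def)
  fix t assume "t \<in> {0..T}"
  then show "\<bar>f1 t\<bar> \<le> supn T f1" "\<bar>f1' t\<bar> \<le> supn T f1'" "\<bar>f2 t\<bar> \<le> supn T f2" "\<bar>f2' t\<bar> \<le> supn T f2'"
    using DERIV_continuous_on[OF d1] DERIV_continuous_on[OF d1'] DERIV_continuous_on[OF d2]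
      DERIV_continuous_on[OF d2'] by (simp_all add: abs_le_supn)
qed (use d1 d2 norm_commutators_le in auto)

lemma flow_has_vector_derivative:
  assumes "t \<in> {0..T}"
  shows "((\<lambda>t. endo_of (U t)) has_vector_derivative (f1 t *\<^sub>R K1 + f2 t *\<^sub>R K2) * endo_of (U t))
           (at t within {0..T})"
  using bounded_linear.has_vector_derivative[OF bounded_linear_endo_of U_ode[OF assms]]
  by (simp add: K1_def K2_def endo_of_mult cmat_add cmat_scaleR endo_of_add endo_of_scaleR)

lemma stepprod_error:
  assumes steps: "\<And>t0. 0 \<le> t0 \<Longrightarrow> t0 + T / real L \<le> T \<Longrightarrow>
      approx_propagator (\<lambda>t. f1 t *\<^sub>R K1 + f2 t *\<^sub>R K2) t0 (t0 + T / real L) (c * (T / real L) ^ Suc k)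
        (endo_of (S t0))"
    and contr: "\<And>t. norm (endo_of (S t)) \<le> 1"
  shows "opn (stepprod S (T / real L) L - U T) \<le> c * T ^ Suc k / real L ^ k"
proof -
  define h where "h = T / real L"
  have L: "0 < real L" using L_ge by simp
  have Lh: "real L * h = T" and h: "0 \<le> h" using L T_pos by (simp_all add: h_def)
  have "norm (trotter_product (\<lambda>t. endo_of (S t)) h L - endo_of (U (real L * h))) \<le> real L * (c * h ^ Suc k)"
  proof (rule trotter_product_error[OF h])
    fix t assume "t \<in> {0..real L * h}"
    then have t: "t \<in> {0..T}" by (simp add: Lh)
    show "((\<lambda>t. endo_of (U t)) has_vector_derivative (f1 t *\<^sub>R K1 + f2 t *\<^sub>R K2) * endo_of (U t))
        (at t within {0..real L * h})"
      unfolding Lh by (rule flow_has_vector_derivative[OF t])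
    show "skew (f1 t *\<^sub>R K1 + f2 t *\<^sub>R K2)"
      using skew_K by (simp add: skew_def inner_add_right)
  next
    fix j assume "j < L"
    then have "real j * h + h \<le> T"
      using h mult_right_mono[of "real j + 1" "real L" h] by (simp add: Lh[symmetric] algebra_simps)
    moreover have "0 \<le> real j * h" using h by simp
    ultimately show "approx_propagator (\<lambda>t. f1 t *\<^sub>R K1 + f2 t *\<^sub>R K2) (real j * h) (real j * h + h)
        (c * h ^ Suc k) (endo_of (S (real j * h)))"
      unfolding h_def by (intro steps)
  qed (simp_all add: U0 endo_of_one contr)
  moreover have "real L * (c * h ^ Suc k) = c * T ^ Suc k / real L ^ k"
    using L by (simp add: h_def power_divide field_simps)
  ultimately show ?thesis
    unfolding opn_eq_norm_endo_of endo_of_diff endo_of_stepprod h_def[symmetric] Lh by linarith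
qed

lemma endo_of_steps:
  "endo_of (Us1 f1 f2 H1 H2 h t) = exp ((f2 (t + h) * h) *\<^sub>R K2) * exp ((f1 (t + h) * h) *\<^sub>R K1)"
  "endo_of (Ug1 f1 f2 H1 H2 h t)
     = exp (integral {t..t + h} f2 *\<^sub>R K2) * exp (integral {t..t + h} f1 *\<^sub>R K1)"
  "endo_of (Us2 f1 f2 H1 H2 h t)
     = exp ((h / 2 * f1 (t + h / 2)) *\<^sub>R K1) * exp ((h * f2 (t + h / 2)) *\<^sub>R K2)
       * exp ((h / 2 * f1 (t + h / 2)) *\<^sub>R K1)"
  "endo_of (Ug2 f1 f2 H1 H2 h t)
     = exp (integral {t + h / 2..t + h} f1 *\<^sub>R K1) * exp (integral {t..t + h} f2 *\<^sub>R K2)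
       * exp (integral {t..t + h / 2} f1 *\<^sub>R K1)"
  unfolding Us1_def Ug1_def Us2_def Ug2_def K1_def K2_def cmat_mult_of_real
  by (simp_all add: endo_of_mult endo_of_mexp endo_of_scaleR)

lemma norm_endo_of_steps_le:
  "norm (endo_of (Us1 f1 f2 H1 H2 h t)) \<le> 1" "norm (endo_of (Ug1 f1 f2 H1 H2 h t)) \<le> 1"
  "norm (endo_of (Us2 f1 f2 H1 H2 h t)) \<le> 1" "norm (endo_of (Ug2 f1 f2 H1 H2 h t)) \<le> 1"
  unfolding endo_of_steps by (intro norm_mult_le_one contr1 contr2)+

lemma supn_nonneg:
  "0 \<le> supn T f1" "0 \<le> supn T f1'" "0 \<le> supn T f1''" "0 \<le> supn T f2" "0 \<le> supn T f2'" "0 \<le> supn T f2''"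
  "0 \<le> opn H1" "0 \<le> opn H2" "0 \<le> opn (comm H1 H2)" "0 \<le> opn (comm H1 (comm H1 H2))"
  "0 \<le> opn (comm H2 (comm H2 H1))"
  using bounds_nonneg abs_le_supn[OF c1'', of 0] abs_le_supn[OF c2'', of 0] T_pos
  by (auto intro: order_trans[OF abs_ge_zero])

lemma s1_error:
  "opn (stepprod (Us1 f1 f2 H1 H2 (T / real L)) (T / real L) L - U T)
     \<le> alpha_s1 T f1 f1' f1'' f2 f2' f2'' H1 H2 * T^2 / real L
       + beta_s1 T f1 f1' f1'' f2 f2' f2'' H1 H2 * T^3 / (real L)^2"
proof -
  have "opn (stepprod (Us1 f1 f2 H1 H2 (T / real L)) (T / real L) L - U T)
      \<le> alpha_s1 T f1 f1' f1'' f2 f2' f2'' H1 H2 * T ^ Suc 1 / real L ^ 1"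
  proof (rule stepprod_error[OF _ norm_endo_of_steps_le(1)])
    fix t0 assume "0 \<le> t0" "t0 + T / real L \<le> T"
    from approx_propagator_s1[OF this(1) _ this(2)] T_pos
    show "approx_propagator (\<lambda>t. f1 t *\<^sub>R K1 + f2 t *\<^sub>R K2) t0 (t0 + T / real L)
        (alpha_s1 T f1 f1' f1'' f2 f2' f2'' H1 H2 * (T / real L) ^ Suc 1) (endo_of (Us1 f1 f2 H1 H2 (T / real L) t0))"
      by (simp add: endo_of_steps alpha_s1_def field_simps power2_eq_square)
  qed
  moreover have "0 \<le> beta_s1 T f1 f1' f1'' f2 f2' f2'' H1 H2 * T^3 / (real L)^2"
    using supn_nonneg T_pos by (simp add: beta_s1_def)
  ultimately show ?thesis by (simp add: power2_eq_square)
qed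

lemma g1_error:
  "opn (stepprod (Ug1 f1 f2 H1 H2 (T / real L)) (T / real L) L - U T)
     \<le> alpha_g1 T f1 f1' f1'' f2 f2' f2'' H1 H2 * T^2 / real L"
proof -
  have "opn (stepprod (Ug1 f1 f2 H1 H2 (T / real L)) (T / real L) L - U T)
      \<le> alpha_g1 T f1 f1' f1'' f2 f2' f2'' H1 H2 * T ^ Suc 1 / real L ^ 1"
  proof (rule stepprod_error[OF _ norm_endo_of_steps_le(2)])
    fix t0 assume "0 \<le> t0" "t0 + T / real L \<le> T"
    from approx_propagator_g1[OF this(1) _ this(2)] T_pos
    show "approx_propagator (\<lambda>t. f1 t *\<^sub>R K1 + f2 t *\<^sub>R K2) t0 (t0 + T / real L)
        (alpha_g1 T f1 f1' f1'' f2 f2' f2'' H1 H2 * (T / real L) ^ Suc 1) (endo_of (Ug1 f1 f2 H1 H2 (T / real L) t0))"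
      by (simp add: endo_of_steps alpha_g1_def field_simps power2_eq_square)
  qed
  then show ?thesis by (simp add: power2_eq_square)
qed

lemma alpha_s2_ge:
  "(supn T f1'' * opn H1 / 8 + supn T f2'' * opn H2 / 8 + supn T f1 * supn T f2' * opn (comm H1 H2) / 4
          + supn T f1' * supn T f2 * opn (comm H1 H2) / 4 + supn T f1 * (supn T f2)\<^sup>2 * opn (comm H2 (comm H2 H1)) / 4
          + (supn T f1)\<^sup>2 * supn T f2 * opn (comm H1 (comm H1 H2)) / 8) / 3
     \<le> alpha_s2 T f1 f1' f1'' f2 f2' f2'' H1 H2"
proof -
  have "alpha_s2 T f1 f1' f1'' f2 f2' f2'' H1 H2
      = (supn T f1'' * opn H1 / 8 + supn T f2'' * opn H2 / 8 + supn T f1 * supn T f2' * opn (comm H1 H2) / 4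
          + supn T f1' * supn T f2 * opn (comm H1 H2) / 4 + supn T f1 * (supn T f2)\<^sup>2 * opn (comm H2 (comm H2 H1)) / 4
          + (supn T f1)\<^sup>2 * supn T f2 * opn (comm H1 (comm H1 H2)) / 8) / 3
        + (supn T f1'' * opn H1 / 4 + supn T f1' * supn T f2 * opn H1 / 12 + supn T f2'' * opn H2 / 4
          + supn T f1' * supn T f2 * opn (comm H1 H2) / 12 + supn T f1 * supn T f2' * opn (comm H1 H2) / 12)"
    by (simp add: alpha_s2_def opn_comm_comm_swap[of H2 H1 H2] field_simps)
  then show ?thesis using supn_nonneg by simp
qed

lemma s2_error:
  "opn (stepprod (Us2 f1 f2 H1 H2 (T / real L)) (T / real L) L - U T)
     \<le> alpha_s2 T f1 f1' f1'' f2 f2' f2'' H1 H2 * T^3 / (real L)^2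
       + beta_s2 T f1 f1' f1'' f2 f2' f2'' H1 H2 * T^4 / (real L)^3
       + gamma_s2 T f1 f1' f1'' f2 f2' f2'' H1 H2 * T^5 / (real L)^4"
proof -
  have Q: "\<And>t. t \<in> {0..T} \<Longrightarrow> \<bar>f1'' t\<bar> \<le> supn T f1''" "\<And>t. t \<in> {0..T} \<Longrightarrow> \<bar>f2'' t\<bar> \<le> supn T f2''"
    using abs_le_supn[OF c1''] abs_le_supn[OF c2''] by auto
  have "opn (stepprod (Us2 f1 f2 H1 H2 (T / real L)) (T / real L) L - U T)
      \<le> alpha_s2 T f1 f1' f1'' f2 f2' f2'' H1 H2 * T ^ Suc 2 / real L ^ 2"
  proof (rule stepprod_error[OF _ norm_endo_of_steps_le(3)])
    fix t0 assume "0 \<le> t0" "t0 + T / real L \<le> T"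
    from approx_propagator_s2[OF d1' d2' Q this(1) _ this(2)] T_pos
    have "approx_propagator (\<lambda>t. f1 t *\<^sub>R K1 + f2 t *\<^sub>R K2) t0 (t0 + T / real L)
        ((supn T f1'' * opn H1 / 8 + supn T f2'' * opn H2 / 8 + supn T f1 * supn T f2' * opn (comm H1 H2) / 4
          + supn T f1' * supn T f2 * opn (comm H1 H2) / 4 + supn T f1 * (supn T f2)\<^sup>2 * opn (comm H2 (comm H2 H1)) / 4
          + (supn T f1)\<^sup>2 * supn T f2 * opn (comm H1 (comm H1 H2)) / 8) / 3 * (T / real L) ^ 3)
        (endo_of (Us2 f1 f2 H1 H2 (T / real L) t0))"
      by (simp add: endo_of_steps)
    then show "approx_propagator (\<lambda>t. f1 t *\<^sub>R K1 + f2 t *\<^sub>R K2) t0 (t0 + T / real L)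
        (alpha_s2 T f1 f1' f1'' f2 f2' f2'' H1 H2 * (T / real L) ^ Suc 2) (endo_of (Us2 f1 f2 H1 H2 (T / real L) t0))"
      by (rule approx_propagator_mono) (use mult_right_mono[OF alpha_s2_ge, of "(T / real L) ^ 3"] T_pos in simp)
  qed
  moreover have "0 \<le> beta_s2 T f1 f1' f1'' f2 f2' f2'' H1 H2 * T^4 / (real L)^3"
    "0 \<le> gamma_s2 T f1 f1' f1'' f2 f2' f2'' H1 H2 * T^5 / (real L)^4"
    using supn_nonneg T_pos opn_comm_comm_swap[of H2 H1 H2] by (simp_all add: beta_s2_def gamma_s2_def)
  ultimately show ?thesis by simp
qed

lemma alpha_g2_ge:
  "(supn T f1 * supn T f2' * opn (comm H1 H2) / 4 + supn T f1' * supn T f2 * opn (comm H1 H2) / 8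
          + supn T f1 * (supn T f2)\<^sup>2 * opn (comm H2 (comm H2 H1)) / 4
          + (supn T f1)\<^sup>2 * supn T f2 * opn (comm H1 (comm H1 H2)) / 8) / 3
     \<le> alpha_g2 T f1 f1' f1'' f2 f2' f2'' H1 H2"
proof -
  have "alpha_g2 T f1 f1' f1'' f2 f2' f2'' H1 H2
      = (supn T f1 * supn T f2' * opn (comm H1 H2) / 4 + supn T f1' * supn T f2 * opn (comm H1 H2) / 8
          + supn T f1 * (supn T f2)\<^sup>2 * opn (comm H2 (comm H2 H1)) / 4
          + (supn T f1)\<^sup>2 * supn T f2 * opn (comm H1 (comm H1 H2)) / 8) / 3
        + (supn T f1 * supn T f2' * opn (comm H1 H2) / 2 + 5 / 12 * (supn T f1' * supn T f2 * opn (comm H1 H2))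
          + (supn T f1)\<^sup>2 * supn T f2 * opn (comm H1 (comm H1 H2)) / 3)"
    by (simp add: alpha_g2_def field_simps)
  then show ?thesis using supn_nonneg by simp
qed

lemma g2_error:
  "opn (stepprod (Ug2 f1 f2 H1 H2 (T / real L)) (T / real L) L - U T)
     \<le> alpha_g2 T f1 f1' f1'' f2 f2' f2'' H1 H2 * T^3 / (real L)^2"
proof -
  have "opn (stepprod (Ug2 f1 f2 H1 H2 (T / real L)) (T / real L) L - U T)
      \<le> alpha_g2 T f1 f1' f1'' f2 f2' f2'' H1 H2 * T ^ Suc 2 / real L ^ 2"
  proof (rule stepprod_error[OF _ norm_endo_of_steps_le(4)])
    fix t0 assume "0 \<le> t0" "t0 + T / real L \<le> T"
    from approx_propagator_g2[OF this(1) _ this(2)] T_pos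
    have "approx_propagator (\<lambda>t. f1 t *\<^sub>R K1 + f2 t *\<^sub>R K2) t0 (t0 + T / real L)
        ((supn T f1 * supn T f2' * opn (comm H1 H2) / 4 + supn T f1' * supn T f2 * opn (comm H1 H2) / 8
          + supn T f1 * (supn T f2)\<^sup>2 * opn (comm H2 (comm H2 H1)) / 4
          + (supn T f1)\<^sup>2 * supn T f2 * opn (comm H1 (comm H1 H2)) / 8) / 3 * (T / real L) ^ 3)
        (endo_of (Ug2 f1 f2 H1 H2 (T / real L) t0))"
      by (simp add: endo_of_steps)
    then show "approx_propagator (\<lambda>t. f1 t *\<^sub>R K1 + f2 t *\<^sub>R K2) t0 (t0 + T / real L)
        (alpha_g2 T f1 f1' f1'' f2 f2' f2'' H1 H2 * (T / real L) ^ Suc 2) (endo_of (Ug2 f1 f2 H1 H2 (T / real L) t0))"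
      by (rule approx_propagator_mono) (use mult_right_mono[OF alpha_g2_ge, of "(T / real L) ^ 3"] T_pos in simp)
  qed
  then show ?thesis by simp
qed

end

theorem theorem2:
  fixes H1 H2 :: "complex^'n^'n"
    and f1 f1' f1'' f2 f2' f2'' :: "real \<Rightarrow> real"
    and T :: real and L :: nat
    and U :: "real \<Rightarrow> complex^'n^'n"
  assumes herm1: "hermitian H1" and herm2: "hermitian H2"
    and T_pos: "T > 0" and L_ge: "L \<ge> 1"
    and d1: "\<And>t. t \<in> {0..T} \<Longrightarrow> (f1 has_real_derivative f1' t) (at t within {0..T})"
    and d1': "\<And>t. t \<in> {0..T} \<Longrightarrow> (f1' has_real_derivative f1'' t) (at t within {0..T})"
    and c1'': "continuous_on {0..T} f1''"
    and d2: "\<And>t. t \<in> {0..T} \<Longrightarrow> (f2 has_real_derivative f2' t) (at t within {0..T})"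
    and d2': "\<And>t. t \<in> {0..T} \<Longrightarrow> (f2' has_real_derivative f2'' t) (at t within {0..T})"
    and c2'': "continuous_on {0..T} f2''"
    and U0: "U 0 = mat 1"
    and U_ode: "\<And>t. t \<in> {0..T} \<Longrightarrow>
        (U has_vector_derivative
           (cmat (- \<i>) (f1 t *\<^sub>R H1 + f2 t *\<^sub>R H2) ** U t)) (at t within {0..T})"
  shows
    "opn (stepprod (Us1 f1 f2 H1 H2 (T / real L)) (T / real L) L - U T)
       \<le> alpha_s1 T f1 f1' f1'' f2 f2' f2'' H1 H2 * T^2 / real L
         + beta_s1 T f1 f1' f1'' f2 f2' f2'' H1 H2 * T^3 / (real L)^2
   \<and> opn (stepprod (Ug1 f1 f2 H1 H2 (T / real L)) (T / real L) L - U T)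
       \<le> alpha_g1 T f1 f1' f1'' f2 f2' f2'' H1 H2 * T^2 / real L
   \<and> opn (stepprod (Us2 f1 f2 H1 H2 (T / real L)) (T / real L) L - U T)
       \<le> alpha_s2 T f1 f1' f1'' f2 f2' f2'' H1 H2 * T^3 / (real L)^2
         + beta_s2 T f1 f1' f1'' f2 f2' f2'' H1 H2 * T^4 / (real L)^3
         + gamma_s2 T f1 f1' f1'' f2 f2' f2'' H1 H2 * T^5 / (real L)^4
   \<and> opn (stepprod (Ug2 f1 f2 H1 H2 (T / real L)) (T / real L) L - U T)
       \<le> alpha_g2 T f1 f1' f1'' f2 f2' f2'' H1 H2 * T^3 / (real L)^2"
proof -
  interpret trotter_problem H1 H2 f1 f1' f1'' f2 f2' f2'' T L U
    using assms by unfold_locales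
  show ?thesis using s1_error g1_error s2_error g2_error by blast
qed

end
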